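(* For the BGW spectral curve with formal parameters $\mathsf v_a$, the coefficients satisfy, for all $g\ge0$, $n\ge1$ with $2g-2+n>0$ and $a_1,\ldots,a_n\ge0$, $$F^{\mathrm{BGW}(g)}_{a_1,\ldots,a_n}=\sum_{m\ge0}\frac{(-1)^m}{m!}\sum_{b_1,\ldots,b_m\ge1}\Big(\prod_{j=1}^m\frac{\mathsf v_{2b_j-1}}{2b_j+1}\Big)F^{\mathrm B(g)}_{a_1,\ldots,a_n,b_1,\ldots,b_m},$$ where only terms with $\sum_ia_i=g-1-\sum_jb_j$ contribute.
   Context: For a meromorphic function $\mathsf y(z)$ (or a formal Laurent series in $z$ with coefficients in a ring of formal parameters) with $\mathsf x(z)=z^2/2$, define multidifferentials $\omega_{g,n}$ ($2g-2+n\ge0$, $n\ge1$) by $\omega_{0,2}(z_1,z_2)=\frac{dz_1\otimes dz_2}{(z_1-z_2)^2}$ and, for $2g-2+n>0$, the Chekhov–Eynard–Orantin recursion $\omega_{g,n}(z_1,\ldots,z_n)=\mathrm{Res}_{w=0}K(z_1,w)\big[\omega_{g-1,n+1}(w,-w,z_K)+\sum'\omega_{h,1+|J|}(w,z_J)\,\omega_{h',1+|J'|}(-w,z_{J'})\big]$, $K(z,w)=\frac{-dz}{(z^2-w^2)(\mathsf y(w)-\mathsf y(-w))\,dw}$, $K=\{2,\ldots,n\}$, where $\sum'$ runs over $h+h'=g$, $J\sqcup J'=K$ excluding terms containing an $\omega_{0,1}$, and $\omega_{g-1,n+1}$ is absent if $g=0$. Writing $\omega_{g,n}=\sum_{a_1,\ldots,a_n\ge0}F^{(g)}_{a_1,\ldots,a_n}\otimes_{i=1}^n\frac{dz_i}{z_i^{2a_i+2}}$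 defines the coefficients. $F^{\mathrm B(g)}$ are those for the Bessel curve $\mathsf y(z)=1/z$; $F^{\mathrm{BGW}(g)}$ those for the BGW curve $\mathsf y(z)=\frac1z+\sum_{a\ge0}\mathsf v_az^a$, with $\mathsf v_a$ formal variables (identity of formal power series in the $\mathsf v$'s). The Bessel coefficients $F^{\mathrm B(g)}_{a_1,\ldots,a_n}$ vanish unless $\sum a_i=g-1$. *)

theory Defs
  imports "HOL-Computational_Algebra.Formal_Laurent_Series" "HOL-Library.Sublist"
begin

text \<open>Finite-support sum: the sum of f over the (assumed finite) set of points of A where
  f does not vanish.  All infinite sums occurring in the topological recursion below are
  of this kind (they have finite support for the curves under consideration).\<close>
definition fsum :: "('b \<Rightarrow> 'a::comm_monoid_add) \<Rightarrow> 'b set \<Rightarrow> 'a" where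
  "fsum f A = sum f {x \<in> A. f x \<noteq> 0}"

text \<open>Spectral curves, x(z) = z^2/2, y given as a formal Laurent series in z.\<close>
definition bgw_y :: "(nat \<Rightarrow> 'a::field) \<Rightarrow> 'a fls" where
  "bgw_y v = fls_X_inv + fps_to_fls (Abs_fps v)"

definition bessel_y :: "'a::field fls" where
  "bessel_y = fls_X_inv"

text \<open>Coefficient of z1^(-2k-2) dz1 in the recursion kernel K(z1,w) (times dw):
  K(z1,w) = - dz1 / ((z1^2 - w^2)(y(w) - y(-w)) dw), with
  1/(z1^2-w^2) = sum_k w^(2k) z1^(-2k-2).\<close>
definition ker_coeff :: "'a::field fls \<Rightarrow> nat \<Rightarrow> 'a fls" where
  "ker_coeff y k = - (fls_X ^ (2*k)) / (y - fls_compose_fps y (- fps_X))"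

text \<open>Coefficient of w^p z^e dw dz in omega_{0,2}(w,z) = dw dz/(w-z)^2 expanded for |w| < |z|.\<close>
definition om02 :: "int \<Rightarrow> int \<Rightarrow> 'a::field" where
  "om02 p e = (if 0 \<le> p \<and> e = - p - 2 then of_int (p + 1) else 0)"

text \<open>A multidifferential omega_{g,n} is represented by its Laurent coefficient function:
  f g n [e1,...,en] is the coefficient of z1^e1 dz1 (x) ... (x) zn^en dzn.
  G f extends a table f of the stable omegas by omega_{0,2} (expanded with the first
  variable near 0).\<close>
definition Gom :: "(nat \<Rightarrow> nat \<Rightarrow> int list \<Rightarrow> 'a::field) \<Rightarrow> nat \<Rightarrow> nat \<Rightarrow> int list \<Rightarrow> 'a" where
  "Gom f h m es = (if h = 0 \<and> m = 2 then om02 (hd es) (hd (tl es)) else f h m es)"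

text \<open>B j is the coefficient of w^j dw^2 (x) prod_{i in K} z_i^{e_i} dz_i of the bracket
  [omega_{g-1,n+1}(w,-w,z_K) + sum' omega_{h,1+|J|}(w,z_J) omega_{h',1+|J'|}(-w,z_J')],
  using d(-w) = -dw; the residue at w = 0 is the coefficient of w^(-1).\<close>
definition ceo_step :: "'a::field fls \<Rightarrow> (nat \<Rightarrow> nat \<Rightarrow> int list \<Rightarrow> 'a) \<Rightarrow> nat \<Rightarrow> nat \<Rightarrow> int list \<Rightarrow> 'a" where
  "ceo_step y f g n e =
    (case e of [] \<Rightarrow> 0
     | e1 # eK \<Rightarrow>
       (let
          B1 = (\<lambda>j::int. if g = 0 then 0
                 else if g = 1 \<and> n = 1 then (if j = -2 then - 1/4 else 0)
                 else - fsum (\<lambda>p. (-1) ^ nat \<bar>j - p\<bar> * f (g - 1) (n + 1) (p # (j - p) # eK)) UNIV);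
          B2 = (\<lambda>j::int. \<Sum>J\<in>Pow {..<n-1}. \<Sum>h\<in>{..g}.
                 if (h = 0 \<and> J = {}) \<or> (h = g \<and> J = {..<n-1}) then 0
                 else - fsum (\<lambda>p. Gom f h (Suc (card J)) (p # nths eK J)
                          * (-1) ^ nat \<bar>j - p\<bar>
                          * Gom f (g - h) (Suc (n - 1 - card J)) ((j - p) # nths eK (- J))) UNIV)
        in if e1 \<le> -2 \<and> even e1
           then fsum (\<lambda>j. (B1 j + B2 j) * fls_nth (ker_coeff y (nat ((- e1 - 2) div 2))) (- 1 - j)) UNIV
           else 0))"

text \<open>omega_{g,n} for 2g-2+n > 0: the step only refers to strictly smaller 2g+n, so
  2g+n iterations starting from 0 give the recursively defined values.\<close>
definition ceo_omega :: "'a::field fls \<Rightarrow> nat \<Rightarrow> nat \<Rightarrow> int list \<Rightarrow> 'a" where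
  "ceo_omega y g n = ((ceo_step y ^^ (2*g + n)) (\<lambda>_ _ _. 0)) g n"

text \<open>F^{(g)}_{a_1..a_n}: coefficient of (x)_i dz_i / z_i^(2a_i+2) in omega_{g,n}.\<close>
definition Fcoef :: "'a::field fls \<Rightarrow> nat \<Rightarrow> nat list \<Rightarrow> 'a" where
  "Fcoef y g as = ceo_omega y g (length as) (map (\<lambda>a. - 2 * int a - 2) as)"

end

theory Submission
  imports Defs
begin

text \<open>With \<open>x = z\<^sup>2/2\<close> the recursion kernel of the BGW curve is
  \<open>-w\<^sup>2\<^sup>k\<^sup>+\<^sup>1 / (2 C(w))\<close> with \<open>C(w) = 1 + \<Sum>\<^sub>b v\<^sub>2\<^sub>b\<^sub>-\<^sub>1 w\<^sup>2\<^sup>b\<close>, while \<open>C = 1\<close> for the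
  Bessel curve. On coefficients the recursion therefore reads
  \<open>F(k, a\<^sub>K) = \<Sum>\<^sub>d \<sigma>\<^sub>d \<Phi>[F](k + d, a\<^sub>K)\<close> with \<open>\<sigma> = 1/C\<close>, where \<open>\<Phi>\<close> is the operator of the
  Bessel recursion \<open>F\<^sup>B = \<Phi>[F\<^sup>B]\<close>; multiplied by \<open>C\<close> it becomes
  \<open>F(k) + \<Sum>\<^sub>b v\<^sub>2\<^sub>b\<^sub>-\<^sub>1 F(k + b) = \<Phi>[F](k)\<close>.
  The Bessel coefficients dressed with the weights \<open>u\<^sub>b = v\<^sub>2\<^sub>b\<^sub>-\<^sub>1 / (2b + 1)\<close> as in the
  theorem satisfy the same relation: dressing is multiplicative on the quadratic terms of \<open>\<Phi>\<close>,
  and the terms of \<open>\<Phi>\<close> merging the first variable with a dressing variable \<open>b\<close> produce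
  \<open>(2b + 1) u\<^sub>b F(k + b) = v\<^sub>2\<^sub>b\<^sub>-\<^sub>1 F(k + b)\<close>. Both families vanish in genus 0 and the relation
  determines them from smaller \<open>2g + n\<close>, so they agree. Homogeneity of the Bessel
  coefficients (\<open>\<Sum>a\<^sub>i = g - 1\<close>) keeps all sums finite.\<close>

unbundle fps_syntax

section \<open>The BGW kernel\<close>

definition bgw_C :: "(nat \<Rightarrow> 'a::field) \<Rightarrow> 'a fps" where
  "bgw_C v = Abs_fps (\<lambda>n. if n = 0 then 1 else if even n then v (n - 1) else 0)"

definition bgw_sigma :: "(nat \<Rightarrow> 'a::field) \<Rightarrow> nat \<Rightarrow> 'a" where
  "bgw_sigma v d = inverse (bgw_C v) $ (2 * d)"

lemma bgw_C_nth_0 [simp]: "bgw_C v $ 0 = 1"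
  by (simp add: bgw_C_def)

lemma bgw_C_nth_even: "bgw_C v $ (2 * b) = (if b = 0 then 1 else v (2 * b - 1))"
  by (simp add: bgw_C_def)

lemma fls_compose_uminus_X_inv:
  "fls_compose_fps (fls_X_inv :: 'a::field fls) (- fps_X) = - fls_X_inv"
proof -
  have "fls_compose_fps (fls_X_inv :: 'a fls) (- fps_X) = fls_compose_fps (fls_shift 1 1) (- fps_X)"
    by (simp add: fls_X_inv_conv_shift_1)
  also have "\<dots> = fps_to_fls (- fps_X) powi (-1)"
    by (subst fls_compose_fps_shift) auto
  also have "\<dots> = - fls_X_inv"
    by (simp add: power_int_minus fls_inverse_X)
  finally show ?thesis .
qed

text \<open>Only the odd part of \<open>y\<close> survives, so the kernel only sees the parameters
  \<open>v\<^sub>2\<^sub>b\<^sub>-\<^sub>1\<close>.\<close>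

lemma bgw_y_minus_reflection:
  "bgw_y v - fls_compose_fps (bgw_y v) (- fps_X) = fls_const 2 * fls_X_inv * fps_to_fls (bgw_C v)"
proof (rule fls_eqI)
  fix m :: int
  have reflection: "fls_compose_fps (bgw_y v) (- fps_X)
      = - fls_X_inv + fps_to_fls (Abs_fps (\<lambda>n. (-1)^n * v n))"
    unfolding bgw_y_def
    by (simp add: fls_compose_fps_add fls_compose_uminus_X_inv fps_compose_uminus')
  have "fls_const 2 * fls_X_inv * fps_to_fls (bgw_C v)
      = fls_shift 1 (fls_const 2 * fps_to_fls (bgw_C v))"
    by (metis fls_X_inv_times_conv_shift(1) mult.left_commute mult.commute)
  then show "(bgw_y v - fls_compose_fps (bgw_y v) (- fps_X)) $$ m
      = (fls_const 2 * fls_X_inv * fps_to_fls (bgw_C v)) $$ m"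
    unfolding reflection
    by (auto simp: bgw_y_def fps_to_fls_nth bgw_C_def nat_add_distrib split: if_splits)
qed

lemma ker_coeff_bgw:
  fixes v :: "nat \<Rightarrow> 'a::field_char_0"
  shows "ker_coeff (bgw_y v) k
    = - (fls_const (1/2) * fls_X ^ (2*k+1) * fps_to_fls (inverse (bgw_C v)))"
proof -
  let ?D = "fls_const 2 * fls_X_inv * fps_to_fls (bgw_C v) :: 'a fls"
  let ?Q = "fls_const (1/2) * fls_X * fps_to_fls (inverse (bgw_C v)) :: 'a fls"
  have "?D * ?Q = (fls_const 2 * fls_const (1/2)) * (fls_X_inv * fls_X)
      * (fps_to_fls (bgw_C v) * fps_to_fls (inverse (bgw_C v)))"
    by (simp add: ac_simps)
  also have "\<dots> = 1"
  proof -
    have "fls_const 2 * fls_const (1/2) = (1::'a fls)"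
      by (simp only: fls_const_mult_const) simp
    moreover have "fls_X_inv * fls_X = (1::'a fls)"
      by (simp add: fls_X_inv_times_conv_shift fls_X_conv_shift_1)
    moreover have "fps_to_fls (bgw_C v) * fps_to_fls (inverse (bgw_C v)) = 1"
      by (simp add: fls_times_fps_to_fls[symmetric] inverse_mult_eq_1')
    ultimately show ?thesis
      by simp
  qed
  finally have "inverse ?D = ?Q"
    by (metis inverse_unique)
  then show ?thesis
    unfolding ker_coeff_def bgw_y_minus_reflection divide_inverse
    by (simp add: ac_simps)
qed

lemma inverse_bgw_C_nth_odd:
  "odd n \<Longrightarrow> inverse (bgw_C (v :: nat \<Rightarrow> 'a::field)) $ n = 0"
proof (induction n rule: less_induct)
  case (less n)
  have "n \<noteq> 0"
    using less.prems by (metis even_zero)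
  then have "0 = (bgw_C v * inverse (bgw_C v)) $ n"
    by (simp add: inverse_mult_eq_1')
  also have "\<dots> = (\<Sum>i=0..n. bgw_C v $ i * inverse (bgw_C v) $ (n - i))"
    by (simp add: fps_mult_nth)
  also have "\<dots> = inverse (bgw_C v) $ n"
  proof -
    have "bgw_C v $ i * inverse (bgw_C v) $ (n - i) = 0" if "i \<in> {1..n}" for i
      using that less by (cases "even i") (auto simp: bgw_C_def)
    then have "(\<Sum>i=1..n. bgw_C v $ i * inverse (bgw_C v) $ (n - i)) = 0"
      by (rule sum.neutral[rule_format])
    then show ?thesis
      using \<open>n \<noteq> 0\<close> by (simp add: sum.atLeast_Suc_atMost del: sum.atLeast_Suc_atMost_Suc_shift)
  qed
  finally show ?case ..
qed

lemma sum_upto_double: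
  "(\<Sum>i\<le>2*e. f i) = (\<Sum>d\<le>e. f (2*d)) + (\<Sum>d<e. f (2*d+1 :: nat))"
proof (induction e)
  case (Suc e)
  have "{..2 * Suc e} = insert (2*e+2) (insert (2*e+1) {..2*e})"
    by auto
  then show ?case
    using Suc by (simp add: add.commute add.left_commute)
qed simp

lemma fps_mult_nth_even:
  fixes A B :: "'a::comm_semiring_1 fps"
  assumes "\<And>n. odd n \<Longrightarrow> A $ n = 0"
  shows "(A * B) $ (2*e) = (\<Sum>d\<le>e. A $ (2*d) * B $ (2*(e - d)))"
proof -
  have "(A * B) $ (2*e) = (\<Sum>i\<le>2*e. A $ i * B $ (2*e - i))"
    by (simp add: fps_mult_nth atLeast0AtMost)
  then show ?thesis
    by (simp add: sum_upto_double assms right_diff_distrib')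
qed

lemma bgw_sigma_convolution:
  "(\<Sum>d\<le>e. bgw_sigma v d * bgw_C v $ (2*(e - d))) = (if e = 0 then 1 else 0)"
proof -
  have "(inverse (bgw_C v) * bgw_C v) $ (2*e) = (if e = 0 then 1 else 0)"
    by (simp add: inverse_mult_eq_1)
  then show ?thesis
    by (simp add: fps_mult_nth_even inverse_bgw_C_nth_odd bgw_sigma_def)
qed

lemma bgw_sigma_zero: "bgw_sigma (\<lambda>_. 0::'a::field) d = (if d = 0 then 1 else 0)"
proof -
  have "bgw_C (\<lambda>_. 0::'a) = 1"
    by (simp add: bgw_C_def fps_eq_iff)
  then show ?thesis
    by (simp add: bgw_sigma_def)
qed

lemma bgw_sigma_inversion:
  fixes X \<Phi> :: "nat \<Rightarrow> 'a::field"
  assumes rel: "\<And>j. X j + (\<Sum>b\<in>{1..N}. v (2*b - 1) * X (j + b)) = \<Phi> j"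
    and vanish: "\<And>j. G \<le> j \<Longrightarrow> X j = 0" and G: "G \<le> N + 1"
  shows "X k = (\<Sum>d<G. bgw_sigma v d * \<Phi> (k + d))"
proof -
  have "\<Phi> j = (\<Sum>b\<le>N. bgw_C v $ (2*b) * X (j + b))" for j
  proof -
    have "{..N} = insert 0 {1..N}"
      by auto
    then show ?thesis
      using rel[of j] by (simp add: bgw_C_nth_even)
  qed
  then have "(\<Sum>d<G. bgw_sigma v d * \<Phi> (k + d))
      = (\<Sum>(d, b)\<in>{..<G} \<times> {..N}. bgw_sigma v d * bgw_C v $ (2*b) * X (k + (d + b)))"
    by (simp add: sum.cartesian_product sum_distrib_left mult.assoc add.assoc)
  also have "\<dots> = (\<Sum>(d, b)\<in>{(d, b). d + b < G}. bgw_sigma v d * bgw_C v $ (2*b) * X (k + (d + b)))"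
  proof -
    have "j < G" if "X (k + j) \<noteq> 0" for j
      using that vanish[of "k + j"] by linarith
    then show ?thesis
      using G by (intro sum.mono_neutral_right) auto
  qed
  also have "\<dots> = (\<Sum>e<G. X (k + e) * (\<Sum>d\<le>e. bgw_sigma v d * bgw_C v $ (2*(e - d))))"
    by (subst sum.triangle_reindex) (simp add: sum_distrib_left mult_ac)
  also have "\<dots> = (\<Sum>e<G. if e = 0 then X k else 0)"
    by (intro sum.cong refl) (simp add: bgw_sigma_convolution)
  also have "\<dots> = X k"
    using vanish[of k] by (simp add: sum.delta)
  finally show ?thesis ..
qed

section \<open>Well-foundedness of the recursion\<close>

definition stable :: "nat \<Rightarrow> nat \<Rightarrow> bool" where
  "stable g n \<longleftrightarrow> 1 \<le> n \<and> 2 < 2*g + n"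

lemma card_Pow_lessThan:
  assumes "J \<in> Pow {..<m::nat}"
  shows "card J \<le> m" and "card J = 0 \<longleftrightarrow> J = {}" and "card J = m \<longleftrightarrow> J = {..<m}"
proof -
  have "finite J"
    using assms finite_subset by auto
  then show "card J = 0 \<longleftrightarrow> J = {}"
    by simp
  show "card J \<le> m"
    using assms by (metis PowD card_lessThan card_mono finite_lessThan)
  show "card J = m \<longleftrightarrow> J = {..<m}"
    using assms by (metis PowD card_lessThan card_subset_eq finite_lessThan)
qed

text \<open>The exceptions are the factors \<open>\<omega>\<^sub>0\<^sub>,\<^sub>2\<close>.\<close>

lemma separating_factors_smaller:
  assumes "c \<le> m" "h \<le> g" "\<not> (h = 0 \<and> c = 0)" "\<not> (h = g \<and> c = m)"
  shows "\<not> (h = 0 \<and> c = 1) \<Longrightarrow> stable h (Suc c) \<and> 2*h + Suc c < 2*g + Suc m"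
    and "\<not> (g - h = 0 \<and> m - c = 1) \<Longrightarrow>
           stable (g - h) (Suc (m - c)) \<and> 2*(g - h) + Suc (m - c) < 2*g + Suc m"
  using assms by (auto simp: stable_def)

lemma Gom_cong: "(h = 0 \<and> m = 2) \<or> f h m = f' h m \<Longrightarrow> Gom f h m = Gom f' h m"
  unfolding Gom_def by (rule ext) auto

lemma ceo_step_cong:
  assumes n: "n \<ge> 1"
    and agree: "\<And>g' n'. stable g' n' \<Longrightarrow> 2*g' + n' < 2*g + n \<Longrightarrow> f g' n' = f' g' n'"
  shows "ceo_step y f g n = ceo_step y f' g n"
proof
  fix e
  have nonseparating: "f (g - 1) (n + 1) = f' (g - 1) (n + 1)" if "g \<noteq> 0" "\<not> (g = 1 \<and> n = 1)"
    using that n by (intro agree) (auto simp: stable_def)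
  have separating: "Gom f h (Suc (card J)) = Gom f' h (Suc (card J))
      \<and> Gom f (g - h) (Suc (n - 1 - card J)) = Gom f' (g - h) (Suc (n - 1 - card J))"
    if J: "J \<in> Pow {..<n-1}" and h: "h \<in> {..g}"
      and ne: "\<not> ((h = 0 \<and> J = {}) \<or> (h = g \<and> J = {..<n-1}))" for J h
  proof -
    have n_eq: "n = Suc (n - 1)"
      using n by simp
    note smaller = separating_factors_smaller[of "card J" "n - 1" h g, folded n_eq]
    have card: "card J \<le> n - 1" "h \<le> g" "\<not> (h = 0 \<and> card J = 0)" "\<not> (h = g \<and> card J = n - 1)"
      using card_Pow_lessThan[OF J] ne h by auto
    have "(h = 0 \<and> Suc (card J) = 2) \<or> f h (Suc (card J)) = f' h (Suc (card J))"
      using smaller(1)[OF card] agree by force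
    moreover have "(g - h = 0 \<and> Suc (n - 1 - card J) = 2)
        \<or> f (g - h) (Suc (n - 1 - card J)) = f' (g - h) (Suc (n - 1 - card J))"
      using smaller(2)[OF card] agree by force
    ultimately show ?thesis
      by (simp add: Gom_cong)
  qed
  show "ceo_step y f g n e = ceo_step y f' g n e"
  proof (cases e)
    case (Cons e1 eK)
    show ?thesis
      unfolding ceo_step_def Cons list.case Let_def
      apply (intro if_cong refl arg_cong2[where f = fsum] ext arg_cong2[where f = "(*)"]
          arg_cong2[where f = "(+)"])
      subgoal
        using nonseparating by (simp del: One_nat_def)
      subgoal
        using separating by (intro sum.cong refl) simp
      done
  qed (simp add: ceo_step_def)
qed

lemma ceo_omega_iterate:
  "stable g n \<Longrightarrow> k \<ge> 2*g + n \<Longrightarrow> (ceo_step y ^^ k) (\<lambda>_ _ _. 0) g n = ceo_omega y g n"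
proof (induction "2*g + n" arbitrary: g n k rule: less_induct)
  case less
  obtain k' where k: "k = Suc k'"
    using less.prems by (cases k) (auto simp: stable_def)
  obtain s where s: "2*g + n = Suc s"
    using less.prems by (cases "2*g + n") (auto simp: stable_def)
  have "(ceo_step y ^^ k) (\<lambda>_ _ _. 0) g n = ceo_step y ((ceo_step y ^^ k') (\<lambda>_ _ _. 0)) g n"
    by (simp add: k)
  also have "\<dots> = ceo_step y ((ceo_step y ^^ s) (\<lambda>_ _ _. 0)) g n"
    using less.hyps less.prems k s by (intro ceo_step_cong) (auto simp: stable_def)
  also have "\<dots> = ceo_omega y g n"
    by (simp add: ceo_omega_def s)
  finally show ?case .
qed

lemma ceo_omega_rec:
  assumes "stable g n"
  shows "ceo_omega y g n es = ceo_step y (ceo_omega y) g n es"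
proof -
  obtain s where s: "2*g + n = Suc s"
    using assms by (cases "2*g + n") (auto simp: stable_def)
  have "ceo_omega y g n = ceo_step y ((ceo_step y ^^ s) (\<lambda>_ _ _. 0)) g n"
    by (simp add: ceo_omega_def s)
  also have "\<dots> = ceo_step y (ceo_omega y) g n"
    using assms s by (intro ceo_step_cong ceo_omega_iterate) (auto simp: stable_def)
  finally show ?thesis
    by simp
qed

lemma ceo_omega_unstable:
  assumes "\<not> stable g n" "n \<ge> 1"
  shows "ceo_omega y g n e = 0"
proof -
  have "g = 0" and n: "n = 1 \<or> n = 2"
    using assms unfolding stable_def by linarith+
  from n show ?thesis
  proof
    assume "n = 1"
    with \<open>g = 0\<close> show ?thesis
      by (simp add: ceo_omega_def ceo_step_def fsum_def split: list.split)
  next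
    assume "n = 2"
    moreover have "Pow {0::nat} = {{}, {0}}" "{..<Suc (Suc 0) - 1} = {0::nat}"
      by auto
    ultimately show ?thesis
      using \<open>g = 0\<close>
      by (simp add: ceo_omega_def ceo_step_def fsum_def numeral_2_eq_2 lessThan_Suc split: list.split)
  qed
qed

lemma ceo_omega_Nil [simp]: "ceo_omega y g n [] = 0"
  by (cases "2*g + n") (simp_all add: ceo_omega_def ceo_step_def)

section \<open>Pole exponents and finitely supported sums\<close>

text \<open>\<open>pole a\<close> is the exponent of \<open>z\<close> in \<open>dz / z\<^sup>2\<^sup>a\<^sup>+\<^sup>2\<close>.\<close>

definition pole :: "nat \<Rightarrow> int" where
  "pole a = - 2 * int a - 2"

lemma pole_eq_iff [simp]: "pole a = pole b \<longleftrightarrow> a = b"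
  by (auto simp: pole_def)

lemma range_pole: "e \<in> range pole \<longleftrightarrow> e \<le> -2 \<and> even e"
proof
  assume "e \<le> -2 \<and> even e"
  then obtain t where "e = 2 * t" "t \<le> -1"
    by (auto elim: evenE)
  then have "e = pole (nat (- t - 1))"
    by (simp add: pole_def)
  then show "e \<in> range pole"
    by blast
qed (auto simp: pole_def)

lemma pole_diff: "a < k \<Longrightarrow> pole k - pole a = pole (k - 1 - a)"
  by (simp add: pole_def of_nat_diff)

lemma minus_one_power_pole: "(-1::'a::ring_1) ^ nat \<bar>pole a\<bar> = 1"
proof -
  have "even (nat \<bar>pole a\<bar>)"
    by (simp add: pole_def even_nat_iff)
  then show ?thesis
    by simp
qed

definition pole_coeffs :: "(nat \<Rightarrow> nat \<Rightarrow> int list \<Rightarrow> 'a) \<Rightarrow> nat \<Rightarrow> nat list \<Rightarrow> 'a" where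
  "pole_coeffs f g as = f g (length as) (map pole as)"

lemma Fcoef_eq_pole_coeffs: "Fcoef y = pole_coeffs (ceo_omega y)"
proof -
  have "(\<lambda>a. - 2 * int a - 2) = pole"
    by (rule ext) (simp add: pole_def)
  then show ?thesis
    by (simp add: Fcoef_def pole_coeffs_def fun_eq_iff)
qed

definition pole_supported :: "(nat \<Rightarrow> nat \<Rightarrow> int list \<Rightarrow> 'a::zero) \<Rightarrow> nat \<Rightarrow> nat \<Rightarrow> bool" where
  "pole_supported f g n \<longleftrightarrow> (\<forall>es. length es = n \<longrightarrow> f g n es \<noteq> 0 \<longrightarrow> set es \<subseteq> range pole)"

lemma pole_supportedD:
  "pole_supported f g n \<Longrightarrow> length es = n \<Longrightarrow> x \<in> set es \<Longrightarrow> x \<notin> range pole \<Longrightarrow> f g n es = 0"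
  unfolding pole_supported_def by blast

lemma pole_supported_set:
  "pole_supported f g n \<Longrightarrow> length es = n \<Longrightarrow> f g n es \<noteq> 0 \<Longrightarrow> set es \<subseteq> range pole"
  unfolding pole_supported_def by blast

lemma fsum_eq_sum:
  assumes "finite S" "S \<subseteq> A" "\<And>x. x \<in> A \<Longrightarrow> x \<notin> S \<Longrightarrow> f x = 0"
  shows "fsum f A = sum f S"
proof -
  have "{x \<in> A. f x \<noteq> 0} \<subseteq> S"
    using assms by auto
  then have "sum f {x \<in> A. f x \<noteq> 0} = sum f S"
    using assms by (intro sum.mono_neutral_left) auto
  then show ?thesis
    by (simp add: fsum_def)
qed

lemma fsum_zero: "(\<And>x. x \<in> A \<Longrightarrow> f x = 0) \<Longrightarrow> fsum f A = 0"
  by (simp add: fsum_def)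

lemma fsum_single: "a \<in> A \<Longrightarrow> (\<And>x. x \<in> A \<Longrightarrow> x \<noteq> a \<Longrightarrow> f x = 0) \<Longrightarrow> fsum f A = f a"
  using fsum_eq_sum[of "{a}" A f] by auto

lemma fsum_reindex:
  assumes "inj \<phi>" "\<And>x. x \<notin> range \<phi> \<Longrightarrow> f x = 0"
  shows "fsum f UNIV = fsum (f \<circ> \<phi>) UNIV"
proof -
  have "{x. f x \<noteq> 0} = \<phi> ` {d. f (\<phi> d) \<noteq> 0}"
  proof (intro set_eqI iffI)
    fix x assume "x \<in> {x. f x \<noteq> 0}"
    moreover from this have "x \<in> range \<phi>"
      using assms(2) by blast
    ultimately obtain d where "x = \<phi> d" "f (\<phi> d) \<noteq> 0"
      by auto
    then show "x \<in> \<phi> ` {d. f (\<phi> d) \<noteq> 0}"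
      by blast
  qed auto
  moreover have "inj_on \<phi> {d. f (\<phi> d) \<noteq> 0}"
    using assms(1) by (simp add: inj_on_def inj_def)
  ultimately show ?thesis
    by (simp add: fsum_def sum.reindex)
qed

text \<open>A product of factors at \<open>w\<close> and \<open>-w\<close> is summed over the splittings \<open>p + q = j\<close>
  of the exponent of \<open>w\<close>, with the sign \<open>(-1)\<^sup>q\<close> coming from \<open>-w\<close>.\<close>

lemma fsum_convolution_poles:
  fixes f :: "int \<Rightarrow> int \<Rightarrow> 'a::ring_1"
  assumes supp: "\<And>p q. f p q \<noteq> 0 \<Longrightarrow> p \<in> range pole \<and> q \<in> range pole"
  shows "fsum (\<lambda>p. (-1) ^ nat \<bar>pole k - p\<bar> * f p (pole k - p)) UNIV
    = (\<Sum>a<k. f (pole a) (pole (k - 1 - a)))"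
proof -
  have "fsum (\<lambda>p. (-1) ^ nat \<bar>pole k - p\<bar> * f p (pole k - p)) UNIV
      = (\<Sum>p\<in>pole ` {..<k}. (-1) ^ nat \<bar>pole k - p\<bar> * f p (pole k - p))"
  proof (rule fsum_eq_sum)
    fix p assume p: "p \<notin> pole ` {..<k}"
    show "(-1) ^ nat \<bar>pole k - p\<bar> * f p (pole k - p) = 0"
    proof (rule ccontr)
      assume "\<not> ?thesis"
      then have "f p (pole k - p) \<noteq> 0"
        by auto
      then have "p \<in> range pole" "pole k - p \<in> range pole"
        using supp by auto
      then obtain a a' where "p = pole a" "pole k - p = pole a'"
        by blast
      then have "p = pole a" "a < k"
        by (auto simp: pole_def)
      then show False
        using p by auto
    qed
  qed auto
  also have "\<dots> = (\<Sum>a<k. f (pole a) (pole (k - 1 - a)))"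
    by (simp add: sum.reindex inj_on_def pole_diff minus_one_power_pole)
  finally show ?thesis .
qed

lemma fsum_om02_left:
  "fsum (\<lambda>p. om02 p (pole c) * (-1) ^ nat \<bar>pole k - p\<bar> * R (pole k - p)) UNIV
    = of_nat (2*c + 1) * R (pole (k + c))"
proof -
  have "pole k - 2 * int c = pole (k + c)" "even (nat \<bar>pole k - 2 * int c\<bar>)"
      "om02 (2 * int c) (pole c) = (of_nat (2*c + 1) :: 'a)"
    by (simp_all add: pole_def even_nat_iff om02_def)
  moreover have "fsum (\<lambda>p. om02 p (pole c) * (-1) ^ nat \<bar>pole k - p\<bar> * R (pole k - p)) UNIV
      = om02 (2 * int c) (pole c) * (-1) ^ nat \<bar>pole k - 2 * int c\<bar> * R (pole k - 2 * int c)"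
    by (rule fsum_single) (auto simp: om02_def pole_def)
  ultimately show ?thesis
    by simp
qed

lemma fsum_om02_right:
  "fsum (\<lambda>p. L p * (-1) ^ nat \<bar>pole k - p\<bar> * om02 (pole k - p) (pole c)) UNIV
    = of_nat (2*c + 1) * L (pole (k + c))"
proof -
  have "pole k - pole (k + c) = 2 * int c" "even (nat \<bar>pole k - pole (k + c)\<bar>)"
      "om02 (2 * int c) (pole c) = (of_nat (2*c + 1) :: 'a)"
    by (simp_all add: pole_def even_nat_iff om02_def)
  moreover have "fsum (\<lambda>p. L p * (-1) ^ nat \<bar>pole k - p\<bar> * om02 (pole k - p) (pole c)) UNIV
      = L (pole (k + c)) * (-1) ^ nat \<bar>pole k - pole (k + c)\<bar> * om02 (pole k - pole (k + c)) (pole c)"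
    by (rule fsum_single) (auto simp: om02_def pole_def)
  ultimately show ?thesis
    by simp
qed

lemma om02_nonzero_pole_shift:
  assumes "om02 p x \<noteq> 0" "pole k - p \<in> range pole"
  shows "x \<in> range pole"
proof -
  have "0 \<le> p" "x = - p - 2"
    using assms(1) by (auto simp: om02_def split: if_splits)
  moreover have "even (pole k - p)"
    using assms(2) range_pole by blast
  then have "even p"
    by (simp add: pole_def)
  ultimately show ?thesis
    unfolding range_pole by simp
qed

lemma fsum_om02_left_nonpole:
  assumes "x \<notin> range pole" "\<And>q. R q \<noteq> 0 \<Longrightarrow> q \<in> range pole"
  shows "fsum (\<lambda>p. om02 p x * (-1) ^ nat \<bar>pole k - p\<bar> * R (pole k - p)) UNIV = 0"
proof -
  have vanish: "om02 p x = 0" if "R (pole k - p) \<noteq> 0" for p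
    using om02_nonzero_pole_shift[of p x k] assms that by auto
  show ?thesis
    by (rule fsum_zero) (metis vanish mult_eq_0_iff)
qed

lemma fsum_om02_right_nonpole:
  assumes "x \<notin> range pole" "\<And>q. L q \<noteq> 0 \<Longrightarrow> q \<in> range pole"
  shows "fsum (\<lambda>p. L p * (-1) ^ nat \<bar>pole k - p\<bar> * om02 (pole k - p) x) UNIV = 0"
proof -
  have vanish: "om02 (pole k - p) x = 0" if "L p \<noteq> 0" for p
    using om02_nonzero_pole_shift[of "pole k - p" x k] assms that by auto
  show ?thesis
    by (rule fsum_zero) (metis vanish mult_eq_0_iff)
qed

lemma fsum_om02_om02:
  "fsum (\<lambda>p. om02 p x * (-1) ^ nat \<bar>pole k - p\<bar> * om02 (pole k - p) x') UNIV = 0"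
  by (rule fsum_zero) (simp add: om02_def pole_def)

section \<open>Sublists and sums over index sets\<close>

lemma nths_inter_lessThan: "nths xs A = nths xs (A \<inter> {..<length xs})"
proof (induction xs arbitrary: A)
  case (Cons x xs)
  have "{j. Suc j \<in> A \<inter> {..<length (x # xs)}} = {j. Suc j \<in> A} \<inter> {..<length xs}"
    by auto
  then show ?case
    using Cons[of "{j. Suc j \<in> A}"] by (simp add: nths_Cons)
qed simp

lemma nths_cong: "A \<inter> {..<length xs} = B \<inter> {..<length xs} \<Longrightarrow> nths xs A = nths xs B"
  by (metis nths_inter_lessThan)

lemma nths_singleton_index: "i < length xs \<Longrightarrow> nths xs {i} = [xs ! i]"
proof (induction xs arbitrary: i)
  case (Cons x xs)
  then show ?case
    by (cases i) (simp_all add: nths_Cons)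
qed simp

lemma length_nths_subset:
  assumes "J \<subseteq> {..<length xs}"
  shows "length (nths xs J) = card J" "length (nths xs (-J)) = length xs - card J"
proof -
  have "{i. i < length xs \<and> i \<in> J} = J" "{i. i < length xs \<and> i \<in> -J} = {..<length xs} - J"
    using assms by auto
  then show "length (nths xs J) = card J" "length (nths xs (-J)) = length xs - card J"
    using assms by (simp_all add: length_nths card_Diff_subset finite_subset)
qed

lemma sum_list_nths_compl:
  "sum_list (nths xs J) + sum_list (nths xs (-J)) = sum_list (xs :: nat list)"
proof (induction xs arbitrary: J)
  case (Cons x xs)
  have "{j. Suc j \<in> - J} = - {j. Suc j \<in> J}"
    by auto
  then show ?case
    using Cons[of "{j. Suc j \<in> J}"] by (auto simp: nths_Cons)
qed simp

lemma nths_Cons_image_Suc: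
  "nths (b # bs) (Suc ` J) = nths bs J"
  "nths (b # bs) (- (Suc ` J)) = b # nths bs (-J)"
  "nths (b # bs) (insert 0 (Suc ` J)) = b # nths bs J"
  "nths (b # bs) (- insert 0 (Suc ` J)) = nths bs (-J)"
proof -
  have "{j. Suc j \<in> Suc ` J} = J" "{j. Suc j \<in> - (Suc ` J)} = -J"
    "{j. Suc j \<in> insert 0 (Suc ` J)} = J" "{j. Suc j \<in> - insert 0 (Suc ` J)} = -J"
    by auto
  then show "nths (b # bs) (Suc ` J) = nths bs J"
    "nths (b # bs) (- (Suc ` J)) = b # nths bs (-J)"
    "nths (b # bs) (insert 0 (Suc ` J)) = b # nths bs J"
    "nths (b # bs) (- insert 0 (Suc ` J)) = nths bs (-J)"
    by (simp_all add: nths_Cons)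
qed

lemma nths_Cons_compl_0: "nths (b # bs) (-{0}) = bs"
proof -
  have "{j. Suc j \<in> - {0}} = UNIV" by auto
  then show ?thesis by (simp add: nths_Cons nths_all)
qed

lemma nths_Cons_compl_Suc: "nths (b # bs) (-{Suc l}) = b # nths bs (-{l})"
proof -
  have "{j. Suc j \<in> - {Suc l}} = -{l}" by auto
  then show ?thesis by (simp add: nths_Cons)
qed

lemma nths_append_compl_left:
  assumes "i < length xs" shows "nths (xs @ ys) (-{i}) = nths xs (-{i}) @ ys"
proof -
  have "{j. j + length xs \<in> - {i}} = UNIV" using assms by auto
  then show ?thesis by (simp add: nths_append nths_all)
qed

lemma nths_append_compl_right: "nths (xs @ ys) (-{length xs + l}) = xs @ nths ys (-{l})"
proof -
  have 1: "nths xs (-{length xs + l}) = xs" by (rule nths_all) auto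
  have 2: "{j. j + length xs \<in> - {length xs + l}} = -{l}" by auto
  show ?thesis by (simp only: nths_append 1 2)
qed

lemma nths_append_union:
  assumes J1: "J1 \<subseteq> {..<length xs}"
  shows "nths (xs @ ys) (J1 \<union> (+) (length xs) ` J2) = nths xs J1 @ nths ys J2"
    and "nths (xs @ ys) (- (J1 \<union> (+) (length xs) ` J2)) = nths xs (-J1) @ nths ys (-J2)"
proof -
  let ?J = "J1 \<union> (+) (length xs) ` J2"
  have "nths xs ?J = nths xs J1" "nths xs (- ?J) = nths xs (-J1)"
    by (auto intro: nths_cong)
  moreover have "{j. j + length xs \<in> ?J} = J2" "{j. j + length xs \<in> - ?J} = -J2"
    using J1 by (auto simp: image_iff add.commute)
  ultimately show "nths (xs @ ys) ?J = nths xs J1 @ nths ys J2"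
    "nths (xs @ ys) (- ?J) = nths xs (-J1) @ nths ys (-J2)"
    by (simp_all only: nths_append)
qed

lemma sum_Pow_card_1:
  "(\<Sum>J\<in>Pow {..<m::nat}. if card J = 1 then G J else 0) = (\<Sum>i<m. G {i})"
proof -
  have "(\<Sum>J\<in>Pow {..<m}. if card J = 1 then G J else 0) = (\<Sum>J\<in>{J\<in>Pow {..<m}. card J = 1}. G J)"
    by (rule sum.inter_filter[symmetric]) simp
  also have "{J\<in>Pow {..<m}. card J = 1} = (\<lambda>i. {i}) ` {..<m}"
    by (auto simp: card_Suc_eq)
  finally show ?thesis
    by (simp add: sum.reindex inj_on_def)
qed

lemma sum_Pow_compl:
  "(\<Sum>J\<in>Pow {..<m::nat}. G J) = (\<Sum>J\<in>Pow {..<m}. G ({..<m} - J))"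
proof -
  have "bij_betw (\<lambda>J. {..<m} - J) (Pow {..<m}) (Pow {..<m})"
    by (rule bij_betw_byWitness[where f' = "\<lambda>J. {..<m} - J"]) auto
  from sum.reindex_bij_betw[OF this, of G] show ?thesis
    by simp
qed

lemma sum_Pow_card_compl_1:
  "(\<Sum>J\<in>Pow {..<m::nat}. if m - card J = 1 then G J else 0) = (\<Sum>i<m. G ({..<m} - {i}))"
proof -
  have "(\<Sum>J\<in>Pow {..<m::nat}. if m - card J = 1 then G J else 0)
      = (\<Sum>J\<in>Pow {..<m::nat}. if m - card ({..<m} - J) = 1 then G ({..<m} - J) else 0)"
    by (rule sum_Pow_compl)
  also have "\<dots> = (\<Sum>J\<in>Pow {..<m::nat}. if card J = 1 then G ({..<m} - J) else 0)"
  proof (rule sum.cong[OF refl])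
    fix J assume "J \<in> Pow {..<m}"
    then have "card ({..<m} - J) = m - card J" "card J \<le> m"
      using card_Pow_lessThan(1) by (auto simp: card_Diff_subset finite_subset)
    then show "(if m - card ({..<m} - J) = 1 then G ({..<m} - J) else 0)
        = (if card J = 1 then G ({..<m} - J) else 0)"
      by auto
  qed
  also have "\<dots> = (\<Sum>i<m. G ({..<m} - {i}))"
    by (rule sum_Pow_card_1)
  finally show ?thesis .
qed

lemma sum_Pow_lessThan_add:
  "(\<Sum>J\<in>Pow {..<a+b::nat}. F J) = (\<Sum>J1\<in>Pow {..<a}. \<Sum>J2\<in>Pow {..<b}. F (J1 \<union> (+) a ` J2))"
proof -
  let ?f = "\<lambda>(J1, J2). J1 \<union> (+) a ` J2"
  have bij: "bij_betw ?f (Pow {..<a} \<times> Pow {..<b}) (Pow {..<a+b})"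
  proof (rule bij_betw_byWitness[where f' = "\<lambda>J. (J \<inter> {..<a}, {j. a + j \<in> J})"])
    show "\<forall>x\<in>Pow {..<a} \<times> Pow {..<b}. (\<lambda>J. (J \<inter> {..<a}, {j. a + j \<in> J})) (?f x) = x"
      by (auto simp: image_iff)
    show "\<forall>y\<in>Pow {..<a+b}. ?f ((\<lambda>J. (J \<inter> {..<a}, {j. a + j \<in> J})) y) = y"
    proof
      fix J assume J: "J \<in> Pow {..<a+b}"
      show "?f ((\<lambda>J. (J \<inter> {..<a}, {j. a + j \<in> J})) J) = J"
      proof (intro equalityI subsetI)
        fix x assume x: "x \<in> J"
        show "x \<in> ?f ((\<lambda>J. (J \<inter> {..<a}, {j. a + j \<in> J})) J)"
        proof (cases "x < a")
          case False
          then have "x = a + (x - a)"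
            by simp
          then show ?thesis
            using x by (metis (mono_tags, lifting) UnI2 case_prod_conv imageI mem_Collect_eq)
        qed (use x in auto)
      qed auto
    qed
    show "?f ` (Pow {..<a} \<times> Pow {..<b}) \<subseteq> Pow {..<a+b}" by auto
    show "(\<lambda>J. (J \<inter> {..<a}, {j. a + j \<in> J})) ` Pow {..<a+b} \<subseteq> Pow {..<a} \<times> Pow {..<b}" by auto
  qed
  have "(\<Sum>J\<in>Pow {..<a+b}. F J) = (\<Sum>x\<in>Pow {..<a} \<times> Pow {..<b}. F (?f x))"
    using sum.reindex_bij_betw[OF bij, of F] by simp
  also have "\<dots> = (\<Sum>J1\<in>Pow {..<a}. \<Sum>J2\<in>Pow {..<b}. F (J1 \<union> (+) a ` J2))"
    by (simp add: sum.cartesian_product split_def)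
  finally show ?thesis .
qed

lemma sum_Pow_lessThan_Suc:
  "(\<Sum>J\<in>Pow {..<Suc m}. F J)
    = (\<Sum>J\<in>Pow {..<m}. F (Suc ` J)) + (\<Sum>J\<in>Pow {..<m}. F (insert 0 (Suc ` J)))"
proof -
  have "Pow {..<Suc 0} = {{}, {0}}" "(+) (Suc 0) = Suc"
    by auto
  then show ?thesis
    using sum_Pow_lessThan_add[where a = 1 and b = m and F = F] by (simp add: sum.distrib)
qed

lemma sum_lessThan_add: "(\<Sum>i<a+b::nat. f i) = (\<Sum>i<a. f i) + (\<Sum>l<b. f (a + l))"
  by (induction b) (simp_all add: add.assoc)

lemma sum_swap3: "(\<Sum>x\<in>A. \<Sum>y\<in>B. \<Sum>z\<in>C. f x y z) = (\<Sum>y\<in>B. \<Sum>z\<in>C. \<Sum>x\<in>A. f x y z)"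
proof -
  have "(\<Sum>x\<in>A. \<Sum>y\<in>B. \<Sum>z\<in>C. f x y z) = (\<Sum>y\<in>B. \<Sum>x\<in>A. \<Sum>z\<in>C. f x y z)" by (rule sum.swap)
  also have "\<dots> = (\<Sum>y\<in>B. \<Sum>z\<in>C. \<Sum>x\<in>A. f x y z)" by (rule sum.cong[OF refl], rule sum.swap)
  finally show ?thesis .
qed

lemma sum_if_eq_and:
  "finite A \<Longrightarrow> a \<in> A \<Longrightarrow> (\<Sum>h\<in>A. if h = a \<and> P then X else 0) = (if P then X else 0)"
  by (cases P) (simp_all add: sum.delta)

lemma length_le_sum_list: "\<forall>b\<in>set bs. 1 \<le> b \<Longrightarrow> length bs \<le> sum_list (bs :: nat list)"
  by (induction bs) auto

section \<open>The Bessel recursion operator\<close>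

text \<open>The recursion for the Bessel curve on coefficients, \<open>F g (k # aK) = bessel_tr F g k aK\<close>:
  the non-separating term, the separating terms, the terms in which \<open>\<omega>\<^sub>0\<^sub>,\<^sub>2\<close> joins the first
  variable to another one, and the initial value \<open>F\<^sup>(\<^sup>1\<^sup>)\<^sub>0 = 1/8\<close>.\<close>

definition bessel_tr :: "(nat \<Rightarrow> nat list \<Rightarrow> 'a::field) \<Rightarrow> nat \<Rightarrow> nat \<Rightarrow> nat list \<Rightarrow> 'a" where
  "bessel_tr F g k aK =
      (if g = 0 then 0 else (1/2) * (\<Sum>a<k. F (g - 1) (a # (k - 1 - a) # aK)))
    + (1/2) * (\<Sum>J\<in>Pow {..<length aK}. \<Sum>h\<in>{..g}. \<Sum>a<k.
                 F h (a # nths aK J) * F (g - h) ((k - 1 - a) # nths aK (- J)))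
    + (\<Sum>i<length aK. of_nat (2 * aK ! i + 1) * F g ((k + aK ! i) # nths aK (- {i})))
    + (if g = 1 \<and> aK = [] \<and> k = 0 then 1/8 else 0)"

lemma bessel_tr_genus0: "(\<And>bs. F 0 bs = 0) \<Longrightarrow> bessel_tr F 0 k aK = 0"
  by (simp add: bessel_tr_def)

lemma bessel_tr_nonzero_cases:
  assumes nz: "bessel_tr F g k aK \<noteq> 0" and F0: "\<And>bs. F 0 bs = 0"
  obtains (const) "g = 1" "aK = []" "k = 0"
    | (nonsep) a where "a < k" "1 \<le> g" "F (g - 1) (a # (k - 1 - a) # aK) \<noteq> 0"
    | (sep) J h a where "J \<subseteq> {..<length aK}" "0 < h" "h < g" "a < k"
        "F h (a # nths aK J) \<noteq> 0" "F (g - h) ((k - 1 - a) # nths aK (- J)) \<noteq> 0"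
    | (merge) i where "i < length aK" "F g ((k + aK ! i) # nths aK (- {i})) \<noteq> 0"
proof (rule ccontr)
  assume none: "\<not> thesis"
  have "F (g - 1) (a # (k - 1 - a) # aK) = 0" if "g \<noteq> 0" "a < k" for a
    using nonsep none that by force
  then have s1: "(if g = 0 then 0 else (1/2) * (\<Sum>a<k. F (g - 1) (a # (k - 1 - a) # aK))) = 0"
    by simp
  have "F h (a # nths aK J) * F (g - h) ((k - 1 - a) # nths aK (- J)) = 0"
    if "J \<subseteq> {..<length aK}" "h \<le> g" "a < k" for J h a
    using sep[of J h a] none that F0 by (cases "h = 0 \<or> h = g") (auto simp: not_less_iff_gr_or_eq)
  then have s2: "(\<Sum>J\<in>Pow {..<length aK}. \<Sum>h\<in>{..g}. \<Sum>a<k.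
      F h (a # nths aK J) * F (g - h) ((k - 1 - a) # nths aK (- J))) = 0"
    by (intro sum.neutral ballI) auto
  have "F g ((k + aK ! i) # nths aK (- {i})) = 0" if "i < length aK" for i
    using merge none that by blast
  then have s3: "(\<Sum>i<length aK. of_nat (2 * aK ! i + 1) * F g ((k + aK ! i) # nths aK (- {i}))) = 0"
    by simp
  have "\<not> (g = 1 \<and> aK = [] \<and> k = 0)"
    using const none by blast
  then have "bessel_tr F g k aK = 0"
    unfolding bessel_tr_def s1 s2 s3 by auto
  with nz show False ..
qed

lemma bessel_tr_homogeneous:
  assumes nz: "bessel_tr F g k aK \<noteq> 0" and F0: "\<And>bs. F 0 bs = 0"
    and hom: "\<And>g' bs. 2*g' + length bs < 2*g + Suc (length aK) \<Longrightarrow> F g' bs \<noteq> 0 \<Longrightarrow>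
      sum_list bs + 1 = g'"
  shows "k + sum_list aK + 1 = g"
  using nz F0
proof (cases rule: bessel_tr_nonzero_cases)
  case (nonsep a)
  then show ?thesis
    using hom[of "g - 1" "a # (k - 1 - a) # aK"] by simp
next
  case (sep J h a)
  have "card J \<le> length aK"
    using card_mono[OF _ sep(1)] by simp
  then have "a + sum_list (nths aK J) + 1 = h"
    and "(k - 1 - a) + sum_list (nths aK (- J)) + 1 = g - h"
    using sep hom[of h "a # nths aK J"] hom[of "g - h" "(k - 1 - a) # nths aK (- J)"]
      length_nths_subset[OF sep(1)] by auto
  then show ?thesis
    using sep(2-4) sum_list_nths_compl[of aK J] by linarith
next
  case (merge i)
  have "sum_list (nths aK {i}) + sum_list (nths aK (- {i})) = sum_list aK"
    by (rule sum_list_nths_compl)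
  moreover have "0 < length aK"
    using merge(1) by linarith
  ultimately show ?thesis
    using merge hom[of g "(k + aK ! i) # nths aK (- {i})"] length_nths_subset[of "{i}" aK]
    by (simp add: nths_singleton_index)
qed simp

lemma bessel_tr_cong:
  assumes F0: "\<And>bs. F 0 bs = 0" and G0: "\<And>bs. G 0 bs = 0"
    and agree: "\<And>g' bs. 1 \<le> g' \<Longrightarrow> g' \<le> g \<Longrightarrow> bs \<noteq> [] \<Longrightarrow>
      2*g' + length bs < 2*g + Suc (length aK) \<Longrightarrow> F g' bs = G g' bs"
  shows "bessel_tr F g k aK = bessel_tr G g k aK"
proof -
  have FG: "F g' bs = G g' bs"
    if "g' \<le> g" "bs \<noteq> []" "2*g' + length bs < 2*g + Suc (length aK)" for g' bs
  proof (cases "g' = 0")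
    case False
    then show ?thesis
      using that by (intro agree) auto
  qed (simp add: F0 G0)
  have nonsep: "F (g - 1) (a # (k - 1 - a) # aK) = G (g - 1) (a # (k - 1 - a) # aK)"
    if "g \<noteq> 0" for a
    using that by (intro FG) auto
  have sep: "F h (a # nths aK J) * F (g - h) ((k - 1 - a) # nths aK (- J))
      = G h (a # nths aK J) * G (g - h) ((k - 1 - a) # nths aK (- J))"
    if "J \<subseteq> {..<length aK}" "h \<le> g" for J h a
  proof (cases "h = 0 \<or> h = g")
    case False
    have len: "length (nths aK J) \<le> length aK" "length (nths aK (- J)) \<le> length aK"
      using that length_nths_subset[of J aK] card_mono[OF _ that(1)] by auto
    have h: "0 < h" "h < g"
      using False that by auto
    have "F h (a # nths aK J) = G h (a # nths aK J)"
      and "F (g - h) ((k - 1 - a) # nths aK (- J)) = G (g - h) ((k - 1 - a) # nths aK (- J))"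
      by (intro FG; use len h in auto)+
    then show ?thesis
      by simp
  qed (auto simp: F0 G0)
  have merge: "F g ((k + aK ! i) # nths aK (- {i})) = G g ((k + aK ! i) # nths aK (- {i}))"
    if "i < length aK" for i
    using that length_nths_subset[of "{i}" aK] by (intro FG) auto
  have s1: "(\<Sum>a<k. F (g - 1) (a # (k - 1 - a) # aK)) = (\<Sum>a<k. G (g - 1) (a # (k - 1 - a) # aK))"
    if "g \<noteq> 0"
    using that by (intro sum.cong refl nonsep)
  have s2: "(\<Sum>J\<in>Pow {..<length aK}. \<Sum>h\<in>{..g}. \<Sum>a<k.
          F h (a # nths aK J) * F (g - h) ((k - 1 - a) # nths aK (- J)))
      = (\<Sum>J\<in>Pow {..<length aK}. \<Sum>h\<in>{..g}. \<Sum>a<k.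
          G h (a # nths aK J) * G (g - h) ((k - 1 - a) # nths aK (- J)))"
    by (intro sum.cong refl sep) auto
  have s3: "(\<Sum>i<length aK. of_nat (2 * aK ! i + 1) * F g ((k + aK ! i) # nths aK (- {i})))
      = (\<Sum>i<length aK. of_nat (2 * aK ! i + 1) * G g ((k + aK ! i) # nths aK (- {i})))"
    by (intro sum.cong refl arg_cong2[where f = "(*)"] merge) auto
  show ?thesis
    unfolding bessel_tr_def s2 s3 using s1 by (cases "g = 0") simp_all
qed

lemma bessel_tr_append:
  fixes F :: "nat \<Rightarrow> nat list \<Rightarrow> 'a::field"
  shows "bessel_tr F g k (aK @ bs) =
      (if g = 0 then 0 else (1/2) * (\<Sum>a<k. F (g - 1) (a # (k - 1 - a) # aK @ bs)))
    + (1/2) * (\<Sum>J1\<in>Pow {..<length aK}. \<Sum>h\<in>{..g}. \<Sum>a<k. \<Sum>J2\<in>Pow {..<length bs}.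
          F h (a # nths aK J1 @ nths bs J2) * F (g - h) ((k - 1 - a) # nths aK (-J1) @ nths bs (-J2)))
    + (\<Sum>i<length aK. of_nat (2 * aK ! i + 1) * F g ((k + aK ! i) # nths aK (-{i}) @ bs))
    + (\<Sum>l<length bs. of_nat (2 * bs ! l + 1) * F g ((k + bs ! l) # aK @ nths bs (-{l})))
    + (if g = 1 \<and> aK @ bs = [] \<and> k = 0 then 1/8 else 0)"
proof -
  let ?m = "length aK"
  let ?t = "\<lambda>J h a. F h (a # nths (aK @ bs) J) * F (g - h) ((k - 1 - a) # nths (aK @ bs) (- J))"
  let ?u = "\<lambda>J1 h a J2. F h (a # nths aK J1 @ nths bs J2)
      * F (g - h) ((k - 1 - a) # nths aK (-J1) @ nths bs (-J2))"
  have "(\<Sum>J\<in>Pow {..<length (aK @ bs)}. \<Sum>h\<in>{..g}. \<Sum>a<k. ?t J h a)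
      = (\<Sum>J1\<in>Pow {..<?m}. \<Sum>J2\<in>Pow {..<length bs}. \<Sum>h\<in>{..g}. \<Sum>a<k.
          ?t (J1 \<union> (+) ?m ` J2) h a)"
    by (simp only: length_append sum_Pow_lessThan_add)
  also have "\<dots> = (\<Sum>J1\<in>Pow {..<?m}. \<Sum>J2\<in>Pow {..<length bs}. \<Sum>h\<in>{..g}. \<Sum>a<k. ?u J1 h a J2)"
  proof (intro sum.cong refl)
    fix J1 J2 h a
    assume "J1 \<in> Pow {..<?m}"
    then show "?t (J1 \<union> (+) ?m ` J2) h a = ?u J1 h a J2"
      by (simp only: PowD nths_append_union)
  qed
  also have "\<dots> = (\<Sum>J1\<in>Pow {..<?m}. \<Sum>h\<in>{..g}. \<Sum>a<k. \<Sum>J2\<in>Pow {..<length bs}. ?u J1 h a J2)"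
    by (rule sum.cong[OF refl], rule sum_swap3)
  moreover have "(\<Sum>i<length (aK @ bs). of_nat (2 * (aK @ bs) ! i + 1)
        * F g ((k + (aK @ bs) ! i) # nths (aK @ bs) (-{i})))
      = (\<Sum>i<?m. of_nat (2 * aK ! i + 1) * F g ((k + aK ! i) # nths aK (-{i}) @ bs))
      + (\<Sum>l<length bs. of_nat (2 * bs ! l + 1) * F g ((k + bs ! l) # aK @ nths bs (-{l})))"
    unfolding length_append sum_lessThan_add
    by (simp add: nth_append nths_append_compl_left nths_append_compl_right)
  ultimately show ?thesis
    unfolding bessel_tr_def by (simp add: algebra_simps)
qed

section \<open>The recursion at pole exponents\<close>

text \<open>The two parts \<open>B1\<close>, \<open>B2\<close> of the bracket in \<^const>\<open>ceo_step\<close>.\<close>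

definition cut_nonsep :: "(nat \<Rightarrow> nat \<Rightarrow> int list \<Rightarrow> 'a::field) \<Rightarrow> nat \<Rightarrow> nat \<Rightarrow> int list \<Rightarrow> int \<Rightarrow> 'a" where
  "cut_nonsep f g n eK j =
    (if g = 0 then 0
     else if g = 1 \<and> n = 1 then (if j = -2 then - 1/4 else 0)
     else - fsum (\<lambda>p. (-1) ^ nat \<bar>j - p\<bar> * f (g - 1) (n + 1) (p # (j - p) # eK)) UNIV)"

definition sep_summand ::
    "(nat \<Rightarrow> nat \<Rightarrow> int list \<Rightarrow> 'a::field) \<Rightarrow> nat \<Rightarrow> nat \<Rightarrow> int list \<Rightarrow> int \<Rightarrow> nat set \<Rightarrow> nat \<Rightarrow> 'a" where
  "sep_summand f g m eK j J h =
    (if (h = 0 \<and> J = {}) \<or> (h = g \<and> J = {..<m}) then 0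
     else - fsum (\<lambda>p. Gom f h (Suc (card J)) (p # nths eK J) * (-1) ^ nat \<bar>j - p\<bar>
                    * Gom f (g - h) (Suc (m - card J)) ((j - p) # nths eK (- J))) UNIV)"

definition cut_sep :: "(nat \<Rightarrow> nat \<Rightarrow> int list \<Rightarrow> 'a::field) \<Rightarrow> nat \<Rightarrow> nat \<Rightarrow> int list \<Rightarrow> int \<Rightarrow> 'a" where
  "cut_sep f g n eK j = (\<Sum>J\<in>Pow {..<n - 1}. \<Sum>h\<in>{..g}. sep_summand f g (n - 1) eK j J h)"

lemma ceo_step_Cons:
  "ceo_step y f g n (e1 # eK) =
    (if e1 \<in> range pole
     then fsum (\<lambda>j. (cut_nonsep f g n eK j + cut_sep f g n eK j)
                    * ker_coeff y (nat ((- e1 - 2) div 2)) $$ (- 1 - j)) UNIV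
     else 0)"
  unfolding ceo_step_def cut_nonsep_def cut_sep_def sep_summand_def Let_def range_pole
  by simp

lemma Gom_genus0:
  "(\<And>m es. f 0 m es = 0) \<Longrightarrow>
    Gom f h m es = (if h = 0 then (if m = 2 then om02 (hd es) (hd (tl es)) else 0) else f h m es)"
  by (simp add: Gom_def)

lemma sep_summand_genus0:
  assumes "\<And>m es. m < Suc n \<Longrightarrow> f 0 m es = 0" "J \<in> Pow {..<n}"
  shows "sep_summand f 0 n eK (pole k) J 0 = 0"
proof (cases "J = {} \<or> J = {..<n}")
  case False
  then have c: "1 \<le> card J" "card J < n"
    using card_Pow_lessThan[OF assms(2)] by auto
  consider "card J = 1" "n - card J = 1" | "card J \<noteq> 1" | "n - card J \<noteq> 1"
    by blast
  then show ?thesis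
  proof cases
    case 1
    then show ?thesis
      by (simp add: sep_summand_def Gom_def numeral_2_eq_2 fsum_om02_om02)
  qed (use c assms(1) in \<open>auto simp: sep_summand_def Gom_def intro!: fsum_zero\<close>)
qed (auto simp: sep_summand_def)

context
  fixes f :: "nat \<Rightarrow> nat \<Rightarrow> int list \<Rightarrow> 'a::field" and g :: nat and aK :: "nat list"
  assumes genus0: "\<And>n es. f 0 n es = 0"
    and supported: "\<And>g' n'. 2*g' + n' < 2*g + Suc (length aK) \<Longrightarrow> pole_supported f g' n'"
    and g: "1 \<le> g"
begin

lemma cut_nonsep_pole:
  "cut_nonsep f g (Suc (length aK)) (map pole aK) (pole k) =
    - ((\<Sum>a<k. pole_coeffs f (g - 1) (a # (k - 1 - a) # aK))
       + (if g = 1 \<and> aK = [] \<and> k = 0 then 1/4 else 0))"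
proof (cases "g = 1 \<and> aK = []")
  case True
  then show ?thesis
    by (auto simp: cut_nonsep_def pole_coeffs_def genus0 pole_def)
next
  case False
  have supp: "pole_supported f (g - 1) (Suc (Suc (length aK)))"
    using g by (intro supported) simp
  have "p \<in> range pole \<and> q \<in> range pole"
    if "f (g - 1) (Suc (Suc (length aK))) (p # q # map pole aK) \<noteq> 0" for p q
    using pole_supported_set[OF supp _ that] by simp
  then have "fsum (\<lambda>p. (-1) ^ nat \<bar>pole k - p\<bar>
                  * f (g - 1) (Suc (Suc (length aK))) (p # (pole k - p) # map pole aK)) UNIV
      = (\<Sum>a<k. pole_coeffs f (g - 1) (a # (k - 1 - a) # aK))"
    by (subst fsum_convolution_poles) (auto simp: pole_coeffs_def)
  moreover have "(g = 0) = False" "(g = 1 \<and> Suc (length aK) = 1) = False"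
    using False g by auto
  ultimately show ?thesis
    unfolding cut_nonsep_def using False by auto
qed

lemma sep_summand_pole_left:
  assumes J: "J \<in> Pow {..<length aK}" "J \<noteq> {}"
  shows "sep_summand f g (length aK) (map pole aK) (pole k) J 0 =
    - (if card J = 1
       then of_nat (2 * hd (nths aK J) + 1) * pole_coeffs f g ((k + hd (nths aK J)) # nths aK (- J))
       else 0)"
proof (cases "card J = 1")
  case True
  then obtain b where b: "nths aK J = [b]"
    using length_nths_subset[of J aK] J by (metis One_nat_def PowD length_0_conv length_Suc_conv)
  have "length (nths aK (- J)) = length aK - 1"
    using length_nths_subset[of J aK] J True by auto
  then have "fsum (\<lambda>p. om02 p (pole b) * (-1) ^ nat \<bar>pole k - p\<bar>
              * f g (Suc (length aK - 1)) ((pole k - p) # map pole (nths aK (- J)))) UNIV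
      = of_nat (2 * b + 1) * pole_coeffs f g ((k + b) # nths aK (- J))"
    by (simp add: fsum_om02_left[where R = "\<lambda>q. f g _ (q # map pole (nths aK (- J)))"]
        pole_coeffs_def)
  then show ?thesis
    using J True g b by (simp add: sep_summand_def Gom_genus0[of f, OF genus0] nths_map)
qed (use J g in \<open>simp add: sep_summand_def Gom_genus0[of f, OF genus0] fsum_zero\<close>)

lemma sep_summand_pole_right:
  assumes J: "J \<in> Pow {..<length aK}" "J \<noteq> {..<length aK}"
  shows "sep_summand f g (length aK) (map pole aK) (pole k) J g =
    - (if length aK - card J = 1
       then of_nat (2 * hd (nths aK (- J)) + 1) * pole_coeffs f g ((k + hd (nths aK (- J))) # nths aK J)
       else 0)"
proof (cases "length aK - card J = 1")
  case True
  then obtain b where b: "nths aK (- J) = [b]"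
    using length_nths_subset[of J aK] J by (metis One_nat_def PowD length_0_conv length_Suc_conv)
  have "length (nths aK J) = card J"
    using length_nths_subset[of J aK] J by auto
  then have "fsum (\<lambda>p. f g (Suc (card J)) (p # map pole (nths aK J)) * (-1) ^ nat \<bar>pole k - p\<bar>
              * om02 (pole k - p) (pole b)) UNIV
      = of_nat (2 * b + 1) * pole_coeffs f g ((k + b) # nths aK J)"
    by (simp add: fsum_om02_right[where L = "\<lambda>q. f g _ (q # map pole (nths aK J))"]
        pole_coeffs_def)
  then show ?thesis
    using J True g b by (simp add: sep_summand_def Gom_genus0[of f, OF genus0] nths_map)
qed (use J g in \<open>simp add: sep_summand_def Gom_genus0[of f, OF genus0] fsum_zero\<close>)

lemma sep_summand_pole_inner:
  assumes J: "J \<in> Pow {..<length aK}" and h: "0 < h" "h < g"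
  shows "sep_summand f g (length aK) (map pole aK) (pole k) J h =
    - (\<Sum>a<k. pole_coeffs f h (a # nths aK J) * pole_coeffs f (g - h) ((k - 1 - a) # nths aK (- J)))"
proof -
  let ?c = "card J" and ?m = "length aK"
  have len: "length (nths aK J) = ?c" "length (nths aK (- J)) = ?m - ?c"
    using length_nths_subset J by auto
  have SL: "pole_supported f h (Suc ?c)" and SR: "pole_supported f (g - h) (Suc (?m - ?c))"
    using h card_Pow_lessThan(1)[OF J] by (intro supported; linarith)+
  have "fsum (\<lambda>p. (-1) ^ nat \<bar>pole k - p\<bar> * (f h (Suc ?c) (p # map pole (nths aK J))
          * f (g - h) (Suc (?m - ?c)) ((pole k - p) # map pole (nths aK (- J))))) UNIV
      = (\<Sum>a<k. pole_coeffs f h (a # nths aK J) * pole_coeffs f (g - h) ((k - 1 - a) # nths aK (- J)))"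
  proof (subst fsum_convolution_poles)
    fix p q
    assume "f h (Suc ?c) (p # map pole (nths aK J))
        * f (g - h) (Suc (?m - ?c)) (q # map pole (nths aK (- J))) \<noteq> 0"
    then show "p \<in> range pole \<and> q \<in> range pole"
      using pole_supported_set[OF SL, of "p # map pole (nths aK J)"]
        pole_supported_set[OF SR, of "q # map pole (nths aK (- J))"] len by auto
  qed (simp add: pole_coeffs_def len)
  then show ?thesis
    using h by (simp add: sep_summand_def Gom_genus0[of f, OF genus0] nths_map mult_ac)
qed

lemma sep_summand_pole:
  assumes J: "J \<in> Pow {..<length aK}" and h: "h \<le> g"
  shows "sep_summand f g (length aK) (map pole aK) (pole k) J h =
    - ((\<Sum>a<k. pole_coeffs f h (a # nths aK J) * pole_coeffs f (g - h) ((k - 1 - a) # nths aK (- J)))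
       + (if h = 0 \<and> card J = 1
          then of_nat (2 * hd (nths aK J) + 1) * pole_coeffs f g ((k + hd (nths aK J)) # nths aK (- J))
          else 0)
       + (if h = g \<and> length aK - card J = 1
          then of_nat (2 * hd (nths aK (- J)) + 1) * pole_coeffs f g ((k + hd (nths aK (- J))) # nths aK J)
          else 0))"
proof -
  have F0: "pole_coeffs f 0 xs = 0" for xs
    by (simp add: pole_coeffs_def genus0)
  consider "(h = 0 \<and> J = {}) \<or> (h = g \<and> J = {..<length aK})" | "h = 0" "J \<noteq> {}"
    | "h = g" "J \<noteq> {..<length aK}" | "0 < h" "h < g"
    using h by linarith
  then show ?thesis
  proof cases
    case 1
    then show ?thesis
      using g card_Pow_lessThan[OF J] by (auto simp: sep_summand_def F0)
  qed (use J g in \<open>simp_all add: sep_summand_pole_left sep_summand_pole_right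
                                 sep_summand_pole_inner F0\<close>)
qed

lemma cut_sep_pole:
  "cut_sep f g (Suc (length aK)) (map pole aK) (pole k) =
    - ((\<Sum>J\<in>Pow {..<length aK}. \<Sum>h\<in>{..g}. \<Sum>a<k.
          pole_coeffs f h (a # nths aK J) * pole_coeffs f (g - h) ((k - 1 - a) # nths aK (- J)))
       + 2 * (\<Sum>i<length aK. of_nat (2 * aK ! i + 1)
                * pole_coeffs f g ((k + aK ! i) # nths aK (- {i}))))"
proof -
  let ?m = "length aK"
  let ?merge = "\<lambda>i. of_nat (2 * aK ! i + 1) * pole_coeffs f g ((k + aK ! i) # nths aK (- {i}))"
  have left: "(\<Sum>J\<in>Pow {..<?m}. \<Sum>h\<in>{..g}. if h = 0 \<and> card J = 1
        then of_nat (2 * hd (nths aK J) + 1) * pole_coeffs f g ((k + hd (nths aK J)) # nths aK (- J))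
        else 0) = (\<Sum>i<?m. ?merge i)"
    by (simp only: sum_if_eq_and finite_atMost atMost_iff le0 sum_Pow_card_1)
      (simp add: nths_singleton_index)
  have right: "(\<Sum>J\<in>Pow {..<?m}. \<Sum>h\<in>{..g}. if h = g \<and> ?m - card J = 1
        then of_nat (2 * hd (nths aK (- J)) + 1) * pole_coeffs f g ((k + hd (nths aK (- J))) # nths aK J)
        else 0) = (\<Sum>i<?m. ?merge i)"
  proof -
    have "nths aK (- ({..<?m} - {i})) = nths aK {i}" "nths aK ({..<?m} - {i}) = nths aK (- {i})"
      if "i < ?m" for i
      using that by (auto intro: nths_cong)
    then have "nths aK (- ({..<?m} - {i})) = [aK ! i]" "nths aK ({..<?m} - {i}) = nths aK (- {i})"
      if "i < ?m" for i
      using that by (simp_all add: nths_singleton_index)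
    then show ?thesis
      by (simp only: sum_if_eq_and finite_atMost atMost_iff order_refl sum_Pow_card_compl_1) simp
  qed
  have "cut_sep f g (Suc ?m) (map pole aK) (pole k) = (\<Sum>J\<in>Pow {..<?m}. \<Sum>h\<in>{..g}.
      - ((\<Sum>a<k. pole_coeffs f h (a # nths aK J) * pole_coeffs f (g - h) ((k - 1 - a) # nths aK (- J)))
         + (if h = 0 \<and> card J = 1
            then of_nat (2 * hd (nths aK J) + 1) * pole_coeffs f g ((k + hd (nths aK J)) # nths aK (- J))
            else 0)
         + (if h = g \<and> ?m - card J = 1
            then of_nat (2 * hd (nths aK (- J)) + 1) * pole_coeffs f g ((k + hd (nths aK (- J))) # nths aK J)
            else 0)))"
    unfolding cut_sep_def diff_Suc_1 by (intro sum.cong refl sep_summand_pole) auto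
  then show ?thesis
    by (simp only: sum.distrib sum_negf left right) (simp add: algebra_simps)
qed


end

lemma cut_terms_pole:
  fixes f :: "nat \<Rightarrow> nat \<Rightarrow> int list \<Rightarrow> 'a::field_char_0"
  assumes genus0: "\<And>n es. f 0 n es = 0"
    and supported: "\<And>g' n'. 2*g' + n' < 2*g + Suc (length aK) \<Longrightarrow> pole_supported f g' n'"
    and g: "1 \<le> g"
  shows "cut_nonsep f g (Suc (length aK)) (map pole aK) (pole k)
           + cut_sep f g (Suc (length aK)) (map pole aK) (pole k)
         = - 2 * bessel_tr (pole_coeffs f) g k aK"
proof -
  note nonsep = cut_nonsep_pole[OF genus0 supported g, where k = k]
    and sep = cut_sep_pole[OF genus0 supported g, where k = k]
  show ?thesis
    using g by (simp add: nonsep sep bessel_tr_def algebra_simps)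
qed

context
  fixes f :: "nat \<Rightarrow> nat \<Rightarrow> int list \<Rightarrow> 'a::field" and g :: nat and eK :: "int list" and x :: int
  assumes genus0: "\<And>n es. f 0 n es = 0"
    and supported: "\<And>g' n'. 2*g' + n' < 2*g + Suc (length eK) \<Longrightarrow> pole_supported f g' n'"
    and g: "1 \<le> g" and x: "x \<in> set eK" "x \<notin> range pole"
begin

lemma cut_nonsep_nonpole: "cut_nonsep f g (Suc (length eK)) eK j = 0"
proof -
  have "f (g - 1) (Suc (Suc (length eK))) (p # q # eK) = 0" for p q
    using g x by (intro pole_supportedD[OF supported]) auto
  then show ?thesis
    using x by (auto simp: cut_nonsep_def intro!: fsum_zero)
qed

lemma nonpole_vanish:
  "x \<in> set es \<Longrightarrow> 2*g' + Suc (length es) < 2*g + Suc (length eK) \<Longrightarrow>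
    f g' (Suc (length es)) (p # es) = 0"
  using x(2) by (intro pole_supportedD[OF supported]) auto

lemma sep_summand_nonpole_left:
  assumes J: "J \<in> Pow {..<length eK}" "J \<noteq> {}"
  shows "sep_summand f g (length eK) eK (pole k) J 0 = 0"
proof -
  have len: "length (nths eK J) = card J" "length (nths eK (- J)) = length eK - card J"
    using length_nths_subset J by auto
  have x_in: "x \<in> set (nths eK J) \<or> x \<in> set (nths eK (- J))"
    using x(1) by (auto simp: set_nths in_set_conv_nth)
  show ?thesis
  proof (cases "card J = 1 \<and> x \<in> set (nths eK J)")
    case True
    then have "nths eK J = [x]"
      using len(1) by (metis One_nat_def length_0_conv length_Suc_conv set_ConsD empty_iff set_empty)
    have supp: "pole_supported f g (Suc (length eK - 1))"
      using True card_Pow_lessThan(1)[OF J(1)] by (intro supported) linarith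
    have "q \<in> range pole" if "f g (Suc (length eK - 1)) (q # nths eK (- J)) \<noteq> 0" for q
      using pole_supported_set[OF supp _ that] len True by simp
    then have "fsum (\<lambda>p. om02 p x * (-1) ^ nat \<bar>pole k - p\<bar>
        * f g (Suc (length eK - 1)) ((pole k - p) # nths eK (- J))) UNIV = 0"
      using x(2) by (intro fsum_om02_left_nonpole[where R = "\<lambda>q. f g _ (q # nths eK (- J))"])
    then show ?thesis
      using J g True \<open>nths eK J = [x]\<close> by (simp add: sep_summand_def Gom_genus0[of f, OF genus0])
  next
    case False
    have "1 \<le> card J"
      using card_Pow_lessThan[OF J(1)] J(2) by auto
    with False show ?thesis
      using J g x_in card_Pow_lessThan(1)[OF J(1)] nonpole_vanish[of "nths eK (- J)" g] len
      by (auto simp: sep_summand_def Gom_genus0[of f, OF genus0] intro!: fsum_zero)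
  qed
qed

lemma sep_summand_nonpole_right:
  assumes J: "J \<in> Pow {..<length eK}" "J \<noteq> {..<length eK}"
  shows "sep_summand f g (length eK) eK (pole k) J g = 0"
proof -
  have len: "length (nths eK J) = card J" "length (nths eK (- J)) = length eK - card J"
    using length_nths_subset J by auto
  have x_in: "x \<in> set (nths eK J) \<or> x \<in> set (nths eK (- J))"
    using x(1) by (auto simp: set_nths in_set_conv_nth)
  show ?thesis
  proof (cases "length eK - card J = 1 \<and> x \<in> set (nths eK (- J))")
    case True
    then have "nths eK (- J) = [x]"
      using len(2) by (metis One_nat_def length_0_conv length_Suc_conv set_ConsD empty_iff set_empty)
    have supp: "pole_supported f g (Suc (card J))"
      using True by (intro supported) linarith
    have "q \<in> range pole" if "f g (Suc (card J)) (q # nths eK J) \<noteq> 0" for q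
      using pole_supported_set[OF supp _ that] len by simp
    then have "fsum (\<lambda>p. f g (Suc (card J)) (p # nths eK J) * (-1) ^ nat \<bar>pole k - p\<bar>
        * om02 (pole k - p) x) UNIV = 0"
      using x(2) by (intro fsum_om02_right_nonpole[where L = "\<lambda>q. f g _ (q # nths eK J)"])
    then show ?thesis
      using J g True \<open>nths eK (- J) = [x]\<close> by (simp add: sep_summand_def Gom_genus0[of f, OF genus0])
  next
    case False
    then show ?thesis
      using J g x_in card_Pow_lessThan[OF J(1)] nonpole_vanish[of "nths eK J" g] len
      by (auto simp: sep_summand_def Gom_genus0[of f, OF genus0] intro!: fsum_zero)
  qed
qed

lemma cut_terms_nonpole:
  "cut_nonsep f g (Suc (length eK)) eK (pole k) + cut_sep f g (Suc (length eK)) eK (pole k) = 0"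
proof -
  have "sep_summand f g (length eK) eK (pole k) J h = 0"
    if J: "J \<in> Pow {..<length eK}" and h: "h \<le> g" for J h
  proof -
    consider "(h = 0 \<and> J = {}) \<or> (h = g \<and> J = {..<length eK})" | "h = 0" "J \<noteq> {}"
      | "h = g" "J \<noteq> {..<length eK}" | "0 < h" "h < g"
      using h by linarith
    then show ?thesis
    proof cases
      case 1
      then show ?thesis
        by (auto simp: sep_summand_def)
    next
      case 2
      then show ?thesis
        using sep_summand_nonpole_left[OF J] by simp
    next
      case 3
      then show ?thesis
        using sep_summand_nonpole_right[OF J] by simp
    next
      case 4
      have "x \<in> set (nths eK J) \<or> x \<in> set (nths eK (- J))"
        using x(1) by (auto simp: set_nths in_set_conv_nth)
      then show ?thesis
        using 4 J card_Pow_lessThan(1)[OF J] length_nths_subset[of J eK]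
          nonpole_vanish[of "nths eK J" h] nonpole_vanish[of "nths eK (- J)" "g - h"]
        by (auto simp: sep_summand_def Gom_genus0[of f, OF genus0] intro!: fsum_zero)
    qed
  qed
  then show ?thesis
    by (simp add: cut_nonsep_nonpole cut_sep_def)
qed


end

section \<open>The BGW and Bessel coefficients\<close>

lemma ker_coeff_bgw_nth:
  fixes v :: "nat \<Rightarrow> 'a::field_char_0"
  shows "ker_coeff (bgw_y v) k $$ m =
    (if int (2*k + 1) \<le> m then - (1/2) * inverse (bgw_C v) $ nat (m - int (2*k + 1)) else 0)"
proof -
  have "fls_const (1/2) * fls_X ^ (2*k + 1) * fps_to_fls (inverse (bgw_C v))
      = fls_const (1/2) * fls_shift (- int (2*k + 1)) (fps_to_fls (inverse (bgw_C v)))"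
    by (simp only: mult.assoc fls_X_power_times_conv_shift(1))
  then show ?thesis
    unfolding ker_coeff_bgw
    by (simp only: fls_uminus_nth fls_mult_const_nth fls_shift_nth fps_to_fls_nth)
      (auto simp: algebra_simps)
qed

lemma ker_coeff_bgw_nth_pole:
  fixes v :: "nat \<Rightarrow> 'a::field_char_0"
  shows "ker_coeff (bgw_y v) k $$ (- 1 - pole (k + d)) = - (1/2) * bgw_sigma v d"
proof -
  have le: "int (2*k + 1) \<le> - 1 - pole (k + d)"
    and eq: "nat (- 1 - pole (k + d) - int (2*k + 1)) = 2 * d"
    by (simp_all add: pole_def)
  show ?thesis
    unfolding ker_coeff_bgw_nth if_P[OF le] eq bgw_sigma_def ..
qed

lemma ker_coeff_bgw_nth_nonzero:
  fixes v :: "nat \<Rightarrow> 'a::field_char_0"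
  assumes "ker_coeff (bgw_y v) k $$ (- 1 - j) \<noteq> 0"
  shows "j \<in> range (\<lambda>d. pole (k + d))"
proof -
  have le: "int (2*k + 1) \<le> - 1 - j"
    and "inverse (bgw_C v) $ nat (- 1 - j - int (2*k + 1)) \<noteq> 0"
    using assms by (auto simp: ker_coeff_bgw_nth split: if_splits)
  then have "even (nat (- 1 - j - int (2*k + 1)))"
    using inverse_bgw_C_nth_odd by blast
  then obtain d where "nat (- 1 - j - int (2*k + 1)) = 2 * d"
    by (auto elim: evenE)
  then have "j = pole (k + d)"
    using le by (simp add: pole_def)
  then show ?thesis
    by blast
qed

lemma ceo_step_bgw_pole:
  fixes v :: "nat \<Rightarrow> 'a::field_char_0"
  shows "ceo_step (bgw_y v) f g n (pole k # eK) =
    fsum (\<lambda>d. - (1/2) * bgw_sigma v d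
               * (cut_nonsep f g n eK (pole (k + d)) + cut_sep f g n eK (pole (k + d)))) UNIV"
proof -
  let ?t = "\<lambda>j. (cut_nonsep f g n eK j + cut_sep f g n eK j) * ker_coeff (bgw_y v) k $$ (- 1 - j)"
  have "nat ((- pole k - 2) div 2) = k"
    by (simp add: pole_def)
  then have "ceo_step (bgw_y v) f g n (pole k # eK) = fsum ?t UNIV"
    by (simp add: ceo_step_Cons)
  also have "\<dots> = fsum (?t \<circ> (\<lambda>d. pole (k + d))) UNIV"
    using ker_coeff_bgw_nth_nonzero by (intro fsum_reindex) (auto simp: inj_def)
  finally show ?thesis
    by (simp add: comp_def ker_coeff_bgw_nth_pole mult_ac)
qed

lemma ceo_omega_bgw_genus0:
  fixes v :: "nat \<Rightarrow> 'a::field_char_0"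
  shows "ceo_omega (bgw_y v) 0 n es = 0"
proof (induction n arbitrary: es rule: less_induct)
  case (less n)
  show ?case
  proof (cases "stable 0 n")
    case True
    have "\<And>m es. m < Suc (n - 1) \<Longrightarrow> ceo_omega (bgw_y v) 0 m es = 0"
      using less.IH True by (simp add: stable_def)
    then have "cut_sep (ceo_omega (bgw_y v)) 0 n eK (pole k) = 0" for k eK
      unfolding cut_sep_def by (simp add: sep_summand_genus0)
    then have "ceo_step (bgw_y v) (ceo_omega (bgw_y v)) 0 n (pole k # eK) = 0" for k eK
      by (simp add: ceo_step_bgw_pole cut_nonsep_def fsum_zero)
    then have "ceo_step (bgw_y v) (ceo_omega (bgw_y v)) 0 n (e1 # eK) = 0" for e1 eK
      by (cases "e1 \<in> range pole") (auto simp: ceo_step_Cons)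
    then show ?thesis
      using True by (cases es) (simp_all add: ceo_omega_rec)
  next
    case False
    then show ?thesis
      by (cases "n = 0") (simp add: ceo_omega_def, simp add: ceo_omega_unstable)
  qed
qed

lemma ceo_omega_bgw_pole_supported:
  fixes v :: "nat \<Rightarrow> 'a::field_char_0"
  shows "pole_supported (ceo_omega (bgw_y v)) g n"
proof (induction "2*g + n" arbitrary: g n rule: less_induct)
  case less
  let ?O = "ceo_omega (bgw_y v)"
  show ?case
    unfolding pole_supported_def
  proof (intro allI impI)
    fix es assume len: "length es = n" and nz: "?O g n es \<noteq> 0"
    have g: "1 \<le> g"
      using nz ceo_omega_bgw_genus0 by (metis less_one not_le)
    obtain e1 eK where es: "es = e1 # eK"
      using nz by (cases es) auto
    have n: "n = Suc (length eK)"
      using len es by simp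
    have rec: "?O g n es = ceo_step (bgw_y v) ?O g n (e1 # eK)"
      using g es n by (simp add: ceo_omega_rec stable_def)
    then have "e1 \<in> range pole"
      using nz by (auto simp: ceo_step_Cons split: if_splits)
    then obtain k where e1: "e1 = pole k"
      by blast
    have "set eK \<subseteq> range pole"
    proof (rule ccontr)
      assume "\<not> set eK \<subseteq> range pole"
      then obtain x where x: "x \<in> set eK" "x \<notin> range pole"
        by auto
      have "cut_nonsep ?O g n eK (pole j) + cut_sep ?O g n eK (pole j) = 0" for j
        unfolding n using ceo_omega_bgw_genus0 less.hyps g x
        by (rule cut_terms_nonpole) (simp_all add: n)
      then have "?O g n es = 0"
        using rec e1 by (simp add: ceo_step_bgw_pole fsum_zero)
      with nz show False ..
    qed
    then show "set es \<subseteq> range pole"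
      using es e1 by simp
  qed
qed

lemma Fcoef_bgw_genus0: "Fcoef (bgw_y (v :: nat \<Rightarrow> 'a::field_char_0)) 0 as = 0"
  by (simp add: Fcoef_eq_pole_coeffs pole_coeffs_def ceo_omega_bgw_genus0)

lemma Fcoef_Nil [simp]: "Fcoef y g [] = 0"
  by (simp add: Fcoef_def)

text \<open>Finiteness of the sum over \<open>d\<close> would follow from degree bounds on the coefficients.\<close>

lemma Fcoef_bgw_rec:
  fixes v :: "nat \<Rightarrow> 'a::field_char_0"
  assumes g: "1 \<le> g"
  shows "Fcoef (bgw_y v) g (k # aK)
    = fsum (\<lambda>d. bgw_sigma v d * bessel_tr (Fcoef (bgw_y v)) g (k + d) aK) UNIV"
proof -
  let ?O = "ceo_omega (bgw_y v)" and ?n = "Suc (length aK)"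
  have cuts: "cut_nonsep ?O g ?n (map pole aK) (pole j) + cut_sep ?O g ?n (map pole aK) (pole j)
      = - 2 * bessel_tr (pole_coeffs ?O) g j aK" for j
    using ceo_omega_bgw_genus0 ceo_omega_bgw_pole_supported g by (rule cut_terms_pole)
  have "stable g ?n"
    using g by (simp add: stable_def)
  then show ?thesis
    by (simp add: Fcoef_eq_pole_coeffs pole_coeffs_def ceo_omega_rec ceo_step_bgw_pole cuts)
qed

lemma bessel_y_eq_bgw_y: "bessel_y = bgw_y (\<lambda>_. 0)"
  by (simp add: bessel_y_def bgw_y_def fps_zero_def[symmetric])

lemma Fcoef_bessel_rec:
  "Fcoef bessel_y g (k # aK) = bessel_tr (Fcoef (bessel_y :: 'a::field_char_0 fls)) g k aK"
proof (cases "g = 0")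
  case True
  then show ?thesis
    by (simp add: bessel_y_eq_bgw_y Fcoef_bgw_genus0 bessel_tr_genus0)
next
  case False
  then show ?thesis
    unfolding bessel_y_eq_bgw_y
    by (simp add: Fcoef_bgw_rec bgw_sigma_zero fsum_single[of 0])
qed

lemma Fcoef_bessel_homogeneous:
  "Fcoef (bessel_y :: 'a::field_char_0 fls) g as \<noteq> 0 \<Longrightarrow> sum_list as + 1 = g"
proof (induction "2*g + length as" arbitrary: g as rule: less_induct)
  case less
  obtain k aK where as: "as = k # aK"
    using less.prems by (cases as) auto
  have nz: "bessel_tr (Fcoef (bessel_y :: 'a fls)) g k aK \<noteq> 0"
    using less.prems as by (simp add: Fcoef_bessel_rec)
  have F0: "Fcoef (bessel_y :: 'a fls) 0 bs = 0" for bs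
    by (simp add: bessel_y_eq_bgw_y Fcoef_bgw_genus0)
  have "k + sum_list aK + 1 = g"
    using less.hyps as by (intro bessel_tr_homogeneous[OF nz F0]) auto
  then show ?case
    using as by simp
qed

section \<open>Weighted sums over lists\<close>

fun wsum :: "(nat \<Rightarrow> 'a::comm_ring_1) \<Rightarrow> nat set \<Rightarrow> nat \<Rightarrow> (nat list \<Rightarrow> 'a) \<Rightarrow> 'a" where
  "wsum u B 0 X = X []"
| "wsum u B (Suc m) X = (\<Sum>b\<in>B. u b * wsum u B m (\<lambda>bs. X (b # bs)))"

lemma wsum_eq_sum_lists:
  assumes "finite B"
  shows "wsum u B m X = (\<Sum>bs\<in>{bs. set bs \<subseteq> B \<and> length bs = m}. prod_list (map u bs) * X bs)"
proof (induction m arbitrary: X)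
  case 0
  have "{bs. set bs \<subseteq> B \<and> length bs = 0} = {[]}"
    by auto
  then show ?case
    by simp
next
  case (Suc m)
  let ?L = "{bs. set bs \<subseteq> B \<and> length bs = m}"
  have "inj_on (\<lambda>(xs, n). n # xs) (?L \<times> B)"
    by (auto simp: inj_on_def)
  then have "(\<Sum>bs\<in>{bs. set bs \<subseteq> B \<and> length bs = Suc m}. prod_list (map u bs) * X bs)
      = (\<Sum>(xs, n)\<in>?L \<times> B. prod_list (map u (n # xs)) * X (n # xs))"
    unfolding lists_length_Suc_eq by (subst sum.reindex) (simp_all add: split_def)
  also have "\<dots> = (\<Sum>xs\<in>?L. \<Sum>n\<in>B. u n * (prod_list (map u xs) * X (n # xs)))"
    by (simp add: sum.cartesian_product mult.assoc)
  also have "\<dots> = (\<Sum>n\<in>B. \<Sum>xs\<in>?L. u n * (prod_list (map u xs) * X (n # xs)))"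
    by (rule sum.swap)
  also have "\<dots> = (\<Sum>n\<in>B. u n * wsum u B m (\<lambda>bs. X (n # bs)))"
    by (simp add: Suc.IH sum_distrib_left)
  finally show ?case
    by simp
qed

lemma wsum_zero [simp]: "wsum u B m (\<lambda>_. 0) = 0"
  by (induction m) simp_all

lemma wsum_add: "wsum u B m (\<lambda>bs. X bs + Y bs) = wsum u B m X + wsum u B m Y"
  by (induction m arbitrary: X Y) (simp_all add: distrib_left sum.distrib)

lemma wsum_cmult: "wsum u B m (\<lambda>bs. c * X bs) = c * wsum u B m X"
  by (induction m arbitrary: X) (simp_all add: sum_distrib_left algebra_simps)

lemma wsum_sum:
  "wsum u B m (\<lambda>bs. \<Sum>i\<in>I. X i bs) = (\<Sum>i\<in>I. wsum u B m (X i))"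
proof (induction m arbitrary: X)
  case (Suc m)
  then show ?case
    by (simp add: sum_distrib_left) (rule sum.swap)
qed simp

lemma wsum_cong:
  "(\<And>bs. length bs = m \<Longrightarrow> set bs \<subseteq> B \<Longrightarrow> X bs = Y bs) \<Longrightarrow> wsum u B m X = wsum u B m Y"
proof (induction m arbitrary: X Y)
  case (Suc m)
  have "wsum u B m (\<lambda>bs. X (b # bs)) = wsum u B m (\<lambda>bs. Y (b # bs))" if "b \<in> B" for b
    using that Suc.prems by (intro Suc.IH) auto
  then show ?case
    by simp
qed simp

lemma binomial_recurrence_sum:
  fixes A C :: "nat \<Rightarrow> 'a::comm_ring_1"
  shows "(\<Sum>p\<le>m. of_nat (m choose p) * (A p * C (Suc m - p) + A (Suc p) * C (m - p)))
       = (\<Sum>p\<le>Suc m. of_nat (Suc m choose p) * (A p * C (Suc m - p)))"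
proof -
  have "(\<Sum>p\<le>m. of_nat (m choose p) * (A p * C (Suc m - p)))
      = (\<Sum>p\<le>Suc m. of_nat (m choose p) * (A p * C (Suc m - p)))"
    by (simp add: binomial_eq_0)
  also have "\<dots> = A 0 * C (Suc m) + (\<Sum>p\<le>m. of_nat (m choose Suc p) * (A (Suc p) * C (m - p)))"
    by (subst sum.atMost_Suc_shift) simp
  finally have shifted: "(\<Sum>p\<le>m. of_nat (m choose p) * (A p * C (Suc m - p)))
      = A 0 * C (Suc m) + (\<Sum>p\<le>m. of_nat (m choose Suc p) * (A (Suc p) * C (m - p)))" .
  have "(\<Sum>p\<le>Suc m. of_nat (Suc m choose p) * (A p * C (Suc m - p)))
      = A 0 * C (Suc m) + (\<Sum>p\<le>m. of_nat (Suc m choose Suc p) * (A (Suc p) * C (m - p)))"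
    by (subst sum.atMost_Suc_shift) simp
  also have "\<dots> = A 0 * C (Suc m) + (\<Sum>p\<le>m. of_nat (m choose Suc p) * (A (Suc p) * C (m - p)))
                 + (\<Sum>p\<le>m. of_nat (m choose p) * (A (Suc p) * C (m - p)))"
    by (simp add: sum.distrib algebra_simps)
  finally show ?thesis
    using shifted by (simp add: sum.distrib algebra_simps)
qed

lemma wsum_shuffle:
  "wsum u B m (\<lambda>bs. \<Sum>J\<in>Pow {..<m}. X (nths bs J) * Y (nths bs (-J)))
   = (\<Sum>p\<le>m. of_nat (m choose p) * (wsum u B p X * wsum u B (m - p) Y))"
proof (induction m arbitrary: X Y)
  case (Suc m)
  let ?W = "\<lambda>p X q Y. wsum u B p X * wsum u B q Y"
  have split_first: "(\<Sum>J\<in>Pow {..<Suc m}. X (nths (b # bs) J) * Y (nths (b # bs) (-J)))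
      = (\<Sum>J\<in>Pow {..<m}. X (nths bs J) * Y (b # nths bs (-J)))
      + (\<Sum>J\<in>Pow {..<m}. X (b # nths bs J) * Y (nths bs (-J)))" for b bs
    by (simp only: sum_Pow_lessThan_Suc nths_Cons_image_Suc)
  have "wsum u B (Suc m) (\<lambda>bs. \<Sum>J\<in>Pow {..<Suc m}. X (nths bs J) * Y (nths bs (-J)))
      = (\<Sum>b\<in>B. u b * (wsum u B m (\<lambda>bs. \<Sum>J\<in>Pow {..<m}. X (nths bs J) * Y (b # nths bs (-J)))
                        + wsum u B m (\<lambda>bs. \<Sum>J\<in>Pow {..<m}. X (b # nths bs J) * Y (nths bs (-J)))))"
    by (simp add: split_first wsum_add)
  also have "\<dots> = (\<Sum>b\<in>B. u b * ((\<Sum>p\<le>m. of_nat (m choose p) * ?W p X (m - p) (\<lambda>l. Y (b # l)))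
                        + (\<Sum>p\<le>m. of_nat (m choose p) * ?W p (\<lambda>l. X (b # l)) (m - p) Y)))"
    by (simp only: Suc.IH[of X "\<lambda>l. Y (b # l)" for b] Suc.IH[of "\<lambda>l. X (b # l)" Y for b])
  also have "\<dots> = (\<Sum>p\<le>m. of_nat (m choose p) * (?W p X (Suc (m - p)) Y + ?W (Suc p) X (m - p) Y))"
    by (simp add: sum_distrib_left sum.distrib sum.swap[of _ B "{..m}"] algebra_simps)
  also have "\<dots> = (\<Sum>p\<le>m. of_nat (m choose p) * (?W p X (Suc m - p) Y + ?W (Suc p) X (m - p) Y))"
    by (rule sum.cong[OF refl]) (simp add: Suc_diff_le)
  also have "\<dots> = (\<Sum>p\<le>Suc m. of_nat (Suc m choose p) * ?W p X (Suc m - p) Y)"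
    by (rule binomial_recurrence_sum[where A = "\<lambda>p. wsum u B p X" and C = "\<lambda>q. wsum u B q Y"])
  finally show ?case .
qed simp

lemma wsum_Suc_swap:
  "(\<Sum>b'\<in>B. u b' * (\<Sum>b\<in>B. w b * wsum u B m (\<lambda>bs. Z b (b' # bs))))
    = (\<Sum>b\<in>B. w b * wsum u B (Suc m) (Z b))"
  by (simp add: sum_distrib_left mult_ac) (rule sum.swap)

lemma wsum_merge:
  "wsum u B (Suc m) (\<lambda>bs. \<Sum>l<Suc m. c (bs ! l) * Z (bs ! l) (nths bs (-{l})))
   = of_nat (Suc m) * (\<Sum>b\<in>B. c b * u b * wsum u B m (Z b))"
proof (induction m arbitrary: Z)
  case 0
  show ?case
    by (simp add: nths_Cons_compl_0 algebra_simps)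
next
  case (Suc m)
  have split_first: "(\<Sum>l<Suc (Suc m). c ((b' # bs) ! l) * Z ((b' # bs) ! l) (nths (b' # bs) (-{l})))
      = c b' * Z b' bs + (\<Sum>l<Suc m. c (bs ! l) * Z (bs ! l) (b' # nths bs (-{l})))" for b' bs
    by (subst sum.lessThan_Suc_shift) (simp add: nths_Cons_compl_0 nths_Cons_compl_Suc)
  have IH: "wsum u B (Suc m) (\<lambda>bs. \<Sum>l<Suc m. c (bs ! l) * Z (bs ! l) (b' # nths bs (-{l})))
      = of_nat (Suc m) * (\<Sum>b\<in>B. c b * u b * wsum u B m (\<lambda>bs. Z b (b' # bs)))" for b'
    using Suc.IH[of "\<lambda>b bs. Z b (b' # bs)"] by simp
  have "wsum u B (Suc (Suc m)) (\<lambda>bs. \<Sum>l<Suc (Suc m). c (bs ! l) * Z (bs ! l) (nths bs (-{l})))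
      = (\<Sum>b'\<in>B. u b' * (c b' * wsum u B (Suc m) (Z b')
          + of_nat (Suc m) * (\<Sum>b\<in>B. c b * u b * wsum u B m (\<lambda>bs. Z b (b' # bs)))))"
    by (simp only: wsum.simps(2)[of u B "Suc m"] split_first wsum_add wsum_cmult IH)
  also have "\<dots> = (\<Sum>b'\<in>B. c b' * u b' * wsum u B (Suc m) (Z b'))
      + of_nat (Suc m) * (\<Sum>b'\<in>B. u b' * (\<Sum>b\<in>B. c b * u b * wsum u B m (\<lambda>bs. Z b (b' # bs))))"
    by (simp add: distrib_left sum.distrib sum_distrib_left mult_ac)
  also have "\<dots> = of_nat (Suc (Suc m)) * (\<Sum>b\<in>B. c b * u b * wsum u B (Suc m) (Z b))"
  proof -
    have "(\<Sum>b'\<in>B. u b' * (\<Sum>b\<in>B. c b * u b * wsum u B m (\<lambda>bs. Z b (b' # bs))))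
        = (\<Sum>b\<in>B. c b * u b * wsum u B (Suc m) (Z b))"
      by (rule wsum_Suc_swap)
    then show ?thesis
      by (simp add: algebra_simps)
  qed
  finally show ?case .
qed

definition neg_exp_coeff :: "nat \<Rightarrow> 'a::field_char_0" where
  "neg_exp_coeff m = (-1) ^ m / fact m"

definition exp_wsum :: "(nat \<Rightarrow> 'a::field_char_0) \<Rightarrow> nat set \<Rightarrow> nat \<Rightarrow> (nat list \<Rightarrow> 'a) \<Rightarrow> 'a" where
  "exp_wsum u B N X = (\<Sum>m\<le>N. neg_exp_coeff m * wsum u B m X)"

lemma exp_wsum_zero [simp]: "exp_wsum u B N (\<lambda>_. 0) = 0"
  by (simp add: exp_wsum_def)

lemma exp_wsum_add: "exp_wsum u B N (\<lambda>bs. X bs + Y bs) = exp_wsum u B N X + exp_wsum u B N Y"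
  by (simp add: exp_wsum_def wsum_add sum.distrib algebra_simps)

lemma exp_wsum_cmult: "exp_wsum u B N (\<lambda>bs. c * X bs) = c * exp_wsum u B N X"
  by (simp add: exp_wsum_def wsum_cmult sum_distrib_left mult_ac)

lemma exp_wsum_sum: "exp_wsum u B N (\<lambda>bs. \<Sum>i\<in>I. X i bs) = (\<Sum>i\<in>I. exp_wsum u B N (X i))"
  unfolding exp_wsum_def wsum_sum sum_distrib_left by (rule sum.swap)

lemma exp_wsum_Nil: "exp_wsum u B N (\<lambda>bs. if bs = [] then c else 0) = c"
proof -
  have "wsum u B (Suc m) (\<lambda>bs. if bs = [] then c else 0) = 0" for m
    by simp
  then show ?thesis
    unfolding exp_wsum_def by (subst sum.atMost_shift) (simp_all add: neg_exp_coeff_def)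
qed

lemma neg_exp_coeff_Suc:
  "neg_exp_coeff (Suc m) * of_nat (Suc m) = - (neg_exp_coeff m :: 'a::field_char_0)"
proof -
  have "(fact m :: 'a) \<noteq> 0" "(of_nat (Suc m) :: 'a) \<noteq> 0"
    by (simp_all del: of_nat_Suc)
  moreover have "neg_exp_coeff (Suc m) * of_nat (Suc m)
      = ((-1) ^ Suc m / (of_nat (Suc m) * fact m)) * (of_nat (Suc m) :: 'a)"
    unfolding neg_exp_coeff_def by (simp only: fact_Suc of_nat_mult of_nat_fact)
  ultimately show ?thesis
    by (simp del: of_nat_Suc add: field_simps neg_exp_coeff_def)
qed

lemma neg_exp_coeff_binomial:
  assumes "p \<le> m"
  shows "neg_exp_coeff m * of_nat (m choose p)
    = neg_exp_coeff p * (neg_exp_coeff (m - p) :: 'a::field_char_0)"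
proof -
  have "(fact m :: 'a) = of_nat (fact p * fact (m - p) * (m choose p))"
    by (simp only: binomial_fact_lemma[OF assms] of_nat_fact)
  also have "\<dots> = of_nat (m choose p) * fact p * fact (m - p)"
    by (simp only: of_nat_mult of_nat_fact mult_ac)
  finally have "(fact m :: 'a) = of_nat (m choose p) * fact p * fact (m - p)" .
  moreover have "(-1::'a) ^ m = (-1) ^ p * (-1) ^ (m - p)"
    using assms by (simp add: power_add[symmetric])
  ultimately show ?thesis
    unfolding neg_exp_coeff_def using assms by (simp add: field_simps)
qed

lemma neg_exp_coeff_wsum_shuffle:
  "neg_exp_coeff m * wsum u B m (\<lambda>bs. \<Sum>J\<in>Pow {..<length bs}. X (nths bs J) * Y (nths bs (- J)))
    = (\<Sum>p\<le>m. neg_exp_coeff p * wsum u B p X * (neg_exp_coeff (m - p) * wsum u B (m - p) Y))"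
proof -
  have "wsum u B m (\<lambda>bs. \<Sum>J\<in>Pow {..<length bs}. X (nths bs J) * Y (nths bs (- J)))
      = wsum u B m (\<lambda>bs. \<Sum>J\<in>Pow {..<m}. X (nths bs J) * Y (nths bs (- J)))"
    by (rule wsum_cong) simp
  then have "neg_exp_coeff m * wsum u B m
        (\<lambda>bs. \<Sum>J\<in>Pow {..<length bs}. X (nths bs J) * Y (nths bs (- J)))
      = (\<Sum>p\<le>m. neg_exp_coeff m * (of_nat (m choose p) * (wsum u B p X * wsum u B (m - p) Y)))"
    by (simp add: wsum_shuffle sum_distrib_left)
  also have "\<dots> = (\<Sum>p\<le>m. neg_exp_coeff p * wsum u B p X * (neg_exp_coeff (m - p) * wsum u B (m - p) Y))"
  proof (rule sum.cong[OF refl])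
    fix p assume "p \<in> {..m}"
    then have "neg_exp_coeff m * of_nat (m choose p) = neg_exp_coeff p * neg_exp_coeff (m - p)"
      by (simp add: neg_exp_coeff_binomial)
    then show "neg_exp_coeff m * (of_nat (m choose p) * (wsum u B p X * wsum u B (m - p) Y))
        = neg_exp_coeff p * wsum u B p X * (neg_exp_coeff (m - p) * wsum u B (m - p) Y)"
      by (metis mult.assoc mult.left_commute)
  qed
  finally show ?thesis .
qed

text \<open>Like the exponential of a derivation, \<^const>\<open>exp_wsum\<close> is multiplicative for the
  shuffle product.\<close>

lemma exp_wsum_shuffle:
  fixes X Y :: "nat list \<Rightarrow> 'a::field_char_0"
  assumes X: "\<And>p. wsum u B p X \<noteq> 0 \<Longrightarrow> p < h1"
    and Y: "\<And>q. wsum u B q Y \<noteq> 0 \<Longrightarrow> q < h2"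
    and N: "h1 + h2 \<le> N + 1"
  shows "exp_wsum u B N (\<lambda>bs. \<Sum>J\<in>Pow {..<length bs}. X (nths bs J) * Y (nths bs (- J)))
    = exp_wsum u B N X * exp_wsum u B N Y"
proof -
  let ?f = "\<lambda>p q. neg_exp_coeff p * wsum u B p X * (neg_exp_coeff q * wsum u B q Y)"
  have "exp_wsum u B N (\<lambda>bs. \<Sum>J\<in>Pow {..<length bs}. X (nths bs J) * Y (nths bs (- J)))
      = (\<Sum>m\<le>N. \<Sum>p\<le>m. ?f p (m - p))"
    by (simp add: exp_wsum_def neg_exp_coeff_wsum_shuffle)
  also have "\<dots> = (\<Sum>(p, q)\<in>{(p, q). p + q \<le> N}. ?f p q)"
    by (rule sum.triangle_reindex_eq[symmetric])
  also have "\<dots> = (\<Sum>(p, q)\<in>{..N} \<times> {..N}. ?f p q)"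
  proof (rule sum.mono_neutral_left)
    show "\<forall>i\<in>{..N} \<times> {..N} - {(p, q). p + q \<le> N}. (case i of (p, q) \<Rightarrow> ?f p q) = 0"
      using X Y N by fastforce
  qed auto
  also have "\<dots> = exp_wsum u B N X * exp_wsum u B N Y"
    by (simp add: exp_wsum_def sum_product sum.cartesian_product)
  finally show ?thesis .
qed

lemma neg_exp_coeff_wsum_merge:
  "neg_exp_coeff (Suc m) * wsum u B (Suc m) (\<lambda>bs. \<Sum>l<length bs. c (bs ! l) * Z (bs ! l) (nths bs (- {l})))
    = - (\<Sum>b\<in>B. c b * u b * (neg_exp_coeff m * wsum u B m (Z b)))"
proof -
  have "wsum u B (Suc m) (\<lambda>bs. \<Sum>l<length bs. c (bs ! l) * Z (bs ! l) (nths bs (- {l})))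
      = wsum u B (Suc m) (\<lambda>bs. \<Sum>l<Suc m. c (bs ! l) * Z (bs ! l) (nths bs (- {l})))"
    by (rule wsum_cong) simp
  then have "neg_exp_coeff (Suc m) * wsum u B (Suc m)
        (\<lambda>bs. \<Sum>l<length bs. c (bs ! l) * Z (bs ! l) (nths bs (- {l})))
      = (neg_exp_coeff (Suc m) * of_nat (Suc m)) * (\<Sum>b\<in>B. c b * u b * wsum u B m (Z b))"
    by (simp only: wsum_merge mult.assoc)
  also have "\<dots> = - neg_exp_coeff m * (\<Sum>b\<in>B. c b * u b * wsum u B m (Z b))"
    by (simp only: neg_exp_coeff_Suc)
  also have "\<dots> = - (\<Sum>b\<in>B. c b * u b * (neg_exp_coeff m * wsum u B m (Z b)))"
    by (simp add: sum_distrib_left sum_negf mult_ac)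
  finally show ?thesis .
qed

lemma exp_wsum_merge:
  fixes Z :: "nat \<Rightarrow> nat list \<Rightarrow> 'a::field_char_0"
  assumes Z: "\<And>b. b \<in> B \<Longrightarrow> wsum u B N (Z b) = 0"
  shows "exp_wsum u B N (\<lambda>bs. \<Sum>l<length bs. c (bs ! l) * Z (bs ! l) (nths bs (- {l})))
    = - (\<Sum>b\<in>B. c b * u b * exp_wsum u B N (Z b))"
proof (cases N)
  case 0
  then show ?thesis
    using Z by (simp add: exp_wsum_def)
next
  case (Suc N')
  have "exp_wsum u B N (\<lambda>bs. \<Sum>l<length bs. c (bs ! l) * Z (bs ! l) (nths bs (- {l})))
      = - (\<Sum>m\<le>N'. \<Sum>b\<in>B. c b * u b * (neg_exp_coeff m * wsum u B m (Z b)))"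
    unfolding exp_wsum_def Suc
    by (subst sum.atMost_Suc_shift) (simp add: sum_negf neg_exp_coeff_wsum_merge del: wsum.simps(2))
  also have "\<dots> = - (\<Sum>b\<in>B. c b * u b * (\<Sum>m\<le>N'. neg_exp_coeff m * wsum u B m (Z b)))"
    by (subst sum.swap) (simp only: sum_distrib_left)
  also have "\<dots> = - (\<Sum>b\<in>B. c b * u b * exp_wsum u B N (Z b))"
  proof -
    have "exp_wsum u B N (Z b) = (\<Sum>m\<le>N'. neg_exp_coeff m * wsum u B m (Z b))" if "b \<in> B" for b
      using Z[OF that] by (simp add: exp_wsum_def Suc)
    then show ?thesis
      by simp
  qed
  finally show ?thesis .
qed

section \<open>Solution of the BGW recursion\<close>

definition bgw_weight :: "(nat \<Rightarrow> 'a::field_char_0) \<Rightarrow> nat \<Rightarrow> 'a" where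
  "bgw_weight v b = v (2*b - 1) / of_nat (2*b + 1)"

text \<open>Bounding the entries and the length of the dressing lists by \<open>N\<close> keeps all sums finite;
  for \<open>g \<le> N\<close> nothing is lost.\<close>

definition bgw_candidate :: "(nat \<Rightarrow> 'a::field_char_0) \<Rightarrow> nat \<Rightarrow> nat \<Rightarrow> nat list \<Rightarrow> 'a" where
  "bgw_candidate v N g as = exp_wsum (bgw_weight v) {1..N} N (\<lambda>bs. Fcoef bessel_y g (as @ bs))"

lemma wsum_Fcoef_bessel_eq_0:
  assumes "g < m + sum_list as + 1"
  shows "wsum u {1..N} m (\<lambda>bs. Fcoef (bessel_y :: 'a::field_char_0 fls) g (as @ bs)) = 0"
proof -
  have "Fcoef (bessel_y :: 'a fls) g (as @ bs) = 0" if "length bs = m" "set bs \<subseteq> {1..N}" for bs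
  proof (rule ccontr)
    assume "Fcoef (bessel_y :: 'a fls) g (as @ bs) \<noteq> 0"
    then have "sum_list as + sum_list bs + 1 = g"
      using Fcoef_bessel_homogeneous by fastforce
    moreover have "length bs \<le> sum_list bs"
      using that(2) by (intro length_le_sum_list) auto
    ultimately show False
      using assms that(1) by linarith
  qed
  then show ?thesis
    using wsum_cong[of m "{1..N}" _ "\<lambda>_. 0" u] by simp
qed

lemma bgw_candidate_eq_0:
  assumes "g < sum_list as + 1"
  shows "bgw_candidate v N g as = 0"
proof -
  have "wsum (bgw_weight v) {1..N} m (\<lambda>bs. Fcoef bessel_y g (as @ bs)) = 0" for m
    using assms by (intro wsum_Fcoef_bessel_eq_0) simp
  then show ?thesis
    unfolding bgw_candidate_def exp_wsum_def by (simp only: mult_zero_right sum.neutral_const)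
qed

lemma bgw_candidate_sep:
  fixes v :: "nat \<Rightarrow> 'a::field_char_0"
  assumes "h \<le> g" "g \<le> N"
  shows "exp_wsum (bgw_weight v) {1..N} N (\<lambda>bs. \<Sum>J\<in>Pow {..<length bs}.
            Fcoef bessel_y h (x # xs @ nths bs J) * Fcoef bessel_y (g - h) (y # ys @ nths bs (- J)))
    = bgw_candidate v N h (x # xs) * bgw_candidate v N (g - h) (y # ys)"
  unfolding bgw_candidate_def append_Cons
proof (rule exp_wsum_shuffle)
  show "p < h" if "wsum (bgw_weight v) {1..N} p (\<lambda>bs. Fcoef bessel_y h (x # xs @ bs)) \<noteq> 0" for p
  proof -
    have "\<not> h < p + sum_list (x # xs) + 1"
      using that wsum_Fcoef_bessel_eq_0[of h p "x # xs" "bgw_weight v" N] by auto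
    then show ?thesis
      by simp
  qed
  show "q < g - h" if "wsum (bgw_weight v) {1..N} q (\<lambda>bs. Fcoef bessel_y (g - h) (y # ys @ bs)) \<noteq> 0" for q
  proof -
    have "\<not> g - h < q + sum_list (y # ys) + 1"
      using that wsum_Fcoef_bessel_eq_0[of "g - h" q "y # ys" "bgw_weight v" N] by auto
    then show ?thesis
      by simp
  qed
qed (use assms in simp)

lemma bgw_candidate_merge:
  fixes v :: "nat \<Rightarrow> 'a::field_char_0"
  assumes "g \<le> N"
  shows "exp_wsum (bgw_weight v) {1..N} N (\<lambda>bs. \<Sum>l<length bs.
            of_nat (2 * bs ! l + 1) * Fcoef bessel_y g ((k + bs ! l) # aK @ nths bs (- {l})))
    = - (\<Sum>b\<in>{1..N}. v (2*b - 1) * bgw_candidate v N g ((k + b) # aK))"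
proof -
  have "exp_wsum (bgw_weight v) {1..N} N (\<lambda>bs. \<Sum>l<length bs.
            of_nat (2 * bs ! l + 1) * Fcoef bessel_y g ((k + bs ! l) # aK @ nths bs (- {l})))
      = - (\<Sum>b\<in>{1..N}. of_nat (2*b + 1) * bgw_weight v b
            * exp_wsum (bgw_weight v) {1..N} N (\<lambda>bs. Fcoef bessel_y g ((k + b) # aK @ bs)))"
  proof (rule exp_wsum_merge[where c = "\<lambda>b. of_nat (2*b + 1)"
        and Z = "\<lambda>b bs. Fcoef bessel_y g ((k + b) # aK @ bs)"])
    fix b assume "b \<in> {1..N}"
    then show "wsum (bgw_weight v) {1..N} N (\<lambda>bs. Fcoef bessel_y g ((k + b) # aK @ bs)) = 0"
      using assms wsum_Fcoef_bessel_eq_0[of g N "(k + b) # aK"] by simp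
  qed
  moreover have "of_nat (2*b + 1) * bgw_weight v b = v (2*b - 1)" for b
    by (simp add: bgw_weight_def del: of_nat_Suc)
  ultimately show ?thesis
    by (simp add: bgw_candidate_def)
qed

text \<open>The shift terms come from the merging terms of the Bessel recursion in which a dressing
  variable meets the first variable.\<close>

lemma bgw_candidate_rec:
  fixes v :: "nat \<Rightarrow> 'a::field_char_0"
  assumes gN: "g \<le> N"
  shows "bgw_candidate v N g (k # aK) + (\<Sum>b\<in>{1..N}. v (2*b - 1) * bgw_candidate v N g ((k + b) # aK))
    = bessel_tr (bgw_candidate v N) g k aK"
proof -
  let ?E = "exp_wsum (bgw_weight v) {1..N} N" and ?F = "Fcoef (bessel_y :: 'a fls)"
  have nonsep: "?E (\<lambda>bs. if g = 0 then 0 else (1/2) * (\<Sum>a<k. ?F (g - 1) (a # (k - 1 - a) # aK @ bs)))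
      = (if g = 0 then 0 else (1/2) * (\<Sum>a<k. bgw_candidate v N (g - 1) (a # (k - 1 - a) # aK)))"
  proof (cases "g = 0")
    case False
    have "?E (\<lambda>bs. (1/2) * (\<Sum>a<k. ?F (g - 1) (a # (k - 1 - a) # aK @ bs)))
        = (1/2) * (\<Sum>a<k. ?E (\<lambda>bs. ?F (g - 1) (a # (k - 1 - a) # aK @ bs)))"
      by (simp only: exp_wsum_cmult exp_wsum_sum)
    with False show ?thesis
      by (simp add: bgw_candidate_def)
  qed simp
  have sep: "?E (\<lambda>bs. (1/2) * (\<Sum>J1\<in>Pow {..<length aK}. \<Sum>h\<in>{..g}. \<Sum>a<k. \<Sum>J2\<in>Pow {..<length bs}.
          ?F h (a # nths aK J1 @ nths bs J2) * ?F (g - h) ((k - 1 - a) # nths aK (-J1) @ nths bs (-J2))))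
      = (1/2) * (\<Sum>J1\<in>Pow {..<length aK}. \<Sum>h\<in>{..g}. \<Sum>a<k.
          bgw_candidate v N h (a # nths aK J1) * bgw_candidate v N (g - h) ((k - 1 - a) # nths aK (- J1)))"
    unfolding exp_wsum_cmult exp_wsum_sum
    by (intro arg_cong2[where f = "(*)"] refl sum.cong bgw_candidate_sep[OF _ gN]) auto
  have merge: "?E (\<lambda>bs. \<Sum>i<length aK. of_nat (2 * aK ! i + 1) * ?F g ((k + aK ! i) # nths aK (-{i}) @ bs))
      = (\<Sum>i<length aK. of_nat (2 * aK ! i + 1) * bgw_candidate v N g ((k + aK ! i) # nths aK (- {i})))"
    by (simp add: exp_wsum_cmult exp_wsum_sum bgw_candidate_def)
  have const: "?E (\<lambda>bs. if g = 1 \<and> aK @ bs = [] \<and> k = 0 then 1/8 else 0)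
      = (if g = 1 \<and> aK = [] \<and> k = 0 then 1/8 else 0)"
  proof (cases "g = 1 \<and> aK = [] \<and> k = 0")
    case False
    then have "(\<lambda>bs. if g = 1 \<and> aK @ bs = [] \<and> k = 0 then 1/8 else 0) = (\<lambda>_. 0 :: 'a)"
      by auto
    with False show ?thesis
      by simp
  qed (simp add: exp_wsum_Nil)
  have "bgw_candidate v N g (k # aK) = ?E (\<lambda>bs. bessel_tr ?F g k (aK @ bs))"
    by (simp add: bgw_candidate_def Fcoef_bessel_rec)
  also have "\<dots> = bessel_tr (bgw_candidate v N) g k aK
      - (\<Sum>b\<in>{1..N}. v (2*b - 1) * bgw_candidate v N g ((k + b) # aK))"
    unfolding bessel_tr_append exp_wsum_add nonsep sep merge const bgw_candidate_merge[OF gN]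
    by (simp add: bessel_tr_def)
  finally show ?thesis
    by simp
qed

lemma Fcoef_bgw_eq_candidate:
  fixes v :: "nat \<Rightarrow> 'a::field_char_0"
  assumes "g \<le> N" "as \<noteq> []"
  shows "Fcoef (bgw_y v) g as = bgw_candidate v N g as"
  using assms
proof (induction "2*g + length as" arbitrary: g as rule: less_induct)
  case less
  let ?F = "Fcoef (bgw_y v)" and ?T = "bgw_candidate v N"
  obtain k aK where as: "as = k # aK"
    using less.prems by (cases as) auto
  have T0: "?T 0 bs = 0" for bs
    by (simp add: bgw_candidate_eq_0)
  have vanish: "?T g (j # aK) = 0" if "g \<le> j" for j
    using that by (intro bgw_candidate_eq_0) simp
  show ?case
  proof (cases "g = 0")
    case False
    have "?F g (k # aK) = fsum (\<lambda>d. bgw_sigma v d * bessel_tr ?F g (k + d) aK) UNIV"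
      using False by (simp add: Fcoef_bgw_rec)
    also have "\<dots> = fsum (\<lambda>d. bgw_sigma v d * bessel_tr ?T g (k + d) aK) UNIV"
    proof -
      have "bessel_tr ?F g j aK = bessel_tr ?T g j aK" for j
        by (rule bessel_tr_cong) (use less as Fcoef_bgw_genus0 T0 in auto)
      then show ?thesis
        by simp
    qed
    also have "\<dots> = (\<Sum>d<g. bgw_sigma v d * bessel_tr ?T g (k + d) aK)"
    proof (rule fsum_eq_sum)
      fix d assume "d \<notin> {..<g}"
      then have "bessel_tr ?T g (k + d) aK = 0"
        using bgw_candidate_rec[OF less.prems(1), of v "k + d" aK] vanish by simp
      then show "bgw_sigma v d * bessel_tr ?T g (k + d) aK = 0"
        by simp
    qed auto
    also have "\<dots> = ?T g (k # aK)"
      using bgw_candidate_rec[OF less.prems(1)] vanish less.prems(1)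
      by (intro bgw_sigma_inversion[symmetric]) auto
    finally show ?thesis
      using as by simp
  qed (simp add: Fcoef_bgw_genus0 T0)
qed

lemma bgw_candidate_eq_fsum:
  fixes v :: "nat \<Rightarrow> 'a::field_char_0"
  assumes "g \<le> N"
  shows "bgw_candidate v N g as =
    fsum (\<lambda>bs. ((-1) ^ length bs / fact (length bs))
                * (\<Prod>b\<leftarrow>bs. v (2 * b - 1) / of_nat (2 * b + 1))
                * Fcoef bessel_y g (as @ bs))
         {bs. \<forall>b\<in>set bs. 1 \<le> b}"
    (is "_ = fsum ?f _")
proof -
  let ?L = "\<lambda>m. {bs. set bs \<subseteq> {1..N} \<and> length bs = m}"
  have "bgw_weight v = (\<lambda>b. v (2 * b - 1) / of_nat (2 * b + 1))"
    by (simp add: fun_eq_iff bgw_weight_def)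
  then have "bgw_candidate v N g as = (\<Sum>m\<le>N. sum ?f (?L m))"
    unfolding bgw_candidate_def exp_wsum_def
    by (simp add: wsum_eq_sum_lists sum_distrib_left neg_exp_coeff_def mult.assoc)
  also have "\<dots> = sum ?f (\<Union>m\<le>N. ?L m)"
    by (rule sum.UNION_disjoint[symmetric]) (auto intro: finite_lists_length_eq)
  also have "\<dots> = fsum ?f {bs. \<forall>b\<in>set bs. 1 \<le> b}"
  proof (rule fsum_eq_sum[symmetric])
    show "finite (\<Union>m\<le>N. ?L m)"
      by (auto intro: finite_lists_length_eq)
    fix bs assume bs: "bs \<in> {bs. \<forall>b\<in>set bs. 1 \<le> b}" "bs \<notin> (\<Union>m\<le>N. ?L m)"
    show "?f bs = 0"
    proof (rule ccontr)
      assume "?f bs \<noteq> 0"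
      then have "sum_list as + sum_list bs + 1 = g"
        using Fcoef_bessel_homogeneous by fastforce
      moreover have "length bs \<le> sum_list bs"
        using bs(1) by (intro length_le_sum_list) auto
      moreover have "b \<le> sum_list bs" if "b \<in> set bs" for b
        using that by (simp add: member_le_sum_list)
      ultimately show False
        using bs assms by fastforce
    qed
  qed auto
  finally show ?thesis .
qed

theorem proposition4p11:
  fixes v :: "nat \<Rightarrow> 'a::field_char_0" and g :: nat and as :: "nat list"
  assumes "length as \<ge> 1" and "2 * g + length as > 2"
  shows "Fcoef (bgw_y v) g as =
    fsum (\<lambda>bs. ((-1) ^ length bs / fact (length bs))
                * (\<Prod>b\<leftarrow>bs. v (2 * b - 1) / of_nat (2 * b + 1))
                * Fcoef bessel_y g (as @ bs))
         {bs. \<forall>b\<in>set bs. 1 \<le> b}"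
proof -
  have "Fcoef (bgw_y v) g as = bgw_candidate v g g as"
    using assms(1) by (intro Fcoef_bgw_eq_candidate) auto
  then show ?thesis
    by (simp add: bgw_candidate_eq_fsum)
qed


end
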